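(* Let $\mathbf{X}$, $\mathbf{X}'$ and $\mathbf{A}$ be $\sigma$-structures and $k\ge1$, and suppose $\mathbf{X}\equiv_k\mathbf{X}'$. Then $\mathrm{SA}^k(\mathbf{X},\mathbf{A})$ is feasible if and only if $\mathrm{SA}^k(\mathbf{X}',\mathbf{A})$ is feasible.
   Context: A signature $\sigma$ is a finite set of relation symbols with arities $\operatorname{ar}(R)\ge1$; a $\sigma$-structure has finite universe and relations $R^\mathbf{A}\subseteq A^{\operatorname{ar}(R)}$. Constraints: $\mathcal{C}_\mathbf{A}=\{R(\mathbf{a}):R\in\sigma,\mathbf{a}\in R^\mathbf{A}\}$ (formal symbols). For a tuple $\mathbf{a}$, $a_i$ is its $i$-th entry, $\{\mathbf{a}\}$ its entry set, $\pi_\mathbf{i}\mathbf{a}=(a_{i_1},\dots,a_{i_n})$ for $\mathbf{i}=(i_1,\dots,i_n)$. $\equiv_1$: factor graph of $\mathbf{A}$ is the bipartite graph on $A\cup\mathcal{C}_\mathbf{A}$ with edges $\{a,R(\mathbf{a})\}$ for $a\in\{\mathbf{a}\}$ labelled $(\{i:a_i=a\},R)$; $\delta_0^\mathbf{A}(v)$ is one of two fixed symbols according as $v\in A$ or $v\in\mathcal{C}_\mathbf{A}$; $\delta_j^\mathbf{A}(v)=\{\{(\text{label of }\{v,w\},\delta_{j-1}^\mathbf{A}(w)):w\text{ adjacent to }v\}\}$; $\delta^\mathbf{A}(v)=(\delta^\mathbf{A}_j(v))_{j\ge0}$; $\mathbf{A}\equiv_1\mathbf{B}$ iff the multisets of $\delta$-values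 over all factor-graph vertices coincide. $\mathbf{A}^{*k}$: universe $\bigcup_{1\le j\le k}A^j\cup\mathcal{C}_\mathbf{A}$, with unary relations $T_{j,S}=\{\mathbf{a}\in A^j:a_i=a_{i'}\ \forall i,i'\in S\}$ ($j\le k$, $S\subseteq[j]$), $R_S=\{R(\mathbf{a}):\mathbf{a}\in R^\mathbf{A},a_i=a_{i'}\ \forall i,i'\in S\}$ ($R\in\sigma$, $S\subseteq[\operatorname{ar}(R)]$), and binary relations $T_{j,\mathbf{i}}=\{(\mathbf{a},\pi_\mathbf{i}\mathbf{a}):\mathbf{a}\in A^j\}$ ($j,j'\le k$, $\mathbf{i}\in[j]^{j'}$), $R_\mathbf{i}=\{(R(\mathbf{a}),\pi_\mathbf{i}\mathbf{a}):\mathbf{a}\in R^\mathbf{A}\}$ ($R\in\sigma$, $j\le k$, $\mathbf{i}\in[\operatorname{ar}(R)]^j$). For $k\ge2$, $\mathbf{A}\equiv_k\mathbf{B}$ means $\mathbf{A}^{*k}\equiv_1\mathbf{B}^{*k}$; for $k=1$, $\equiv_k$ is $\equiv_1$. $\mathrm{SA}^k(\mathbf{X},\mathbf{A})$: variables $p_V(f)\in[0,1]$ ($V\subseteq X$, $1\le|V|\le k$, $f:V\to A$) and $p_{R(\mathbf{x})}(f)\in[0,1]$ ($R(\mathbf{x})\in\mathcal{C}_\mathbf{X}$, $f:\{\mathbf{x}\}\to A$); constraints $\sum_f p_V(f)=1$; $p_U(f)=\sum_{g:V\to A,g|_U=f}p_V(g)$ for $\emptyset\ne U\subseteq V$, $|V|\le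 k$; $p_U(f)=\sum_{g:\{\mathbf{x}\}\to A,g|_U=f}p_{R(\mathbf{x})}(g)$ for $\emptyset\ne U\subseteq\{\mathbf{x}\}$, $|U|\le k$; $p_{R(\mathbf{x})}(f)=0$ if $f(\mathbf{x})\notin R^\mathbf{A}$. Feasible means a rational solution exists. *)

theory Defs
  imports Complex_Main "HOL-Library.Multiset" "HOL-Library.FuncSet"
begin

text \<open>Tuple positions are indexed from 0 (the paper uses 1-based indices; this is a
  mere relabelling and does not affect any notion below).\<close>

record ('a, 'r) struc =
  univ :: "'a set"
  rels :: "'r \<Rightarrow> 'a list set"

definition wf_sig :: "'r set \<Rightarrow> ('r \<Rightarrow> nat) \<Rightarrow> bool" where
  "wf_sig sig ar \<longleftrightarrow> finite sig \<and> (\<forall>R\<in>sig. 1 \<le> ar R)"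

definition wf_struc :: "'r set \<Rightarrow> ('r \<Rightarrow> nat) \<Rightarrow> ('a, 'r) struc \<Rightarrow> bool" where
  "wf_struc sig ar A \<longleftrightarrow> finite (univ A) \<and>
     (\<forall>R\<in>sig. \<forall>t\<in>rels A R. length t = ar R \<and> set t \<subseteq> univ A)"

definition constraints :: "'r set \<Rightarrow> ('a, 'r) struc \<Rightarrow> ('r \<times> 'a list) set" where
  "constraints sig A = {(R, t) | R t. R \<in> sig \<and> t \<in> rels A R}"

definition fg_vertices :: "'r set \<Rightarrow> ('a, 'r) struc \<Rightarrow> ('a + 'r \<times> 'a list) set" where
  "fg_vertices sig A = Inl ` univ A \<union> Inr ` constraints sig A"

definition edge_label :: "'a \<Rightarrow> 'r \<times> 'a list \<Rightarrow> nat set \<times> 'r" where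
  "edge_label a c = ({i. i < length (snd c) \<and> snd c ! i = a}, fst c)"

datatype 'l colour = Col0 bool | ColN "('l \<times> 'l colour) multiset"

text \<open>delta j v is \<open>\<delta>\<^sub>j(v)\<close>; the two base symbols are Col0 True (elements) and Col0 False (constraints).\<close>
fun delta :: "'r set \<Rightarrow> ('a, 'r) struc \<Rightarrow> nat \<Rightarrow> ('a + 'r \<times> 'a list) \<Rightarrow> (nat set \<times> 'r) colour" where
  "delta sig A 0 v = Col0 (isl v)"
| "delta sig A (Suc j) (Inl a) =
     ColN (image_mset (\<lambda>c. (edge_label a c, delta sig A j (Inr c)))
                      (mset_set {c \<in> constraints sig A. a \<in> set (snd c)}))"
| "delta sig A (Suc j) (Inr c) =
     ColN (image_mset (\<lambda>a. (edge_label a c, delta sig A j (Inl a)))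
                      (mset_set (set (snd c))))"

definition delta_seq :: "'r set \<Rightarrow> ('a, 'r) struc \<Rightarrow> ('a + 'r \<times> 'a list) \<Rightarrow> nat \<Rightarrow> (nat set \<times> 'r) colour" where
  "delta_seq sig A v = (\<lambda>j. delta sig A j v)"

definition equiv1 :: "'r set \<Rightarrow> ('a, 'r) struc \<Rightarrow> ('b, 'r) struc \<Rightarrow> bool" where
  "equiv1 sig A B \<longleftrightarrow>
     image_mset (delta_seq sig A) (mset_set (fg_vertices sig A)) =
     image_mset (delta_seq sig B) (mset_set (fg_vertices sig B))"

text \<open>Symbols: TS j S = \<open>T\<^sub>j\<^sub>,\<^sub>S\<close>, RS R S = \<open>R\<^sub>S\<close> (unary); Ti j i = \<open>T\<^sub>j\<^sub>,\<^sub>i\<close>, Ri R i = \<open>R\<^sub>i\<close> (binary).\<close>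
datatype 'r ksym = TS nat "nat set" | RS 'r "nat set" | Ti nat "nat list" | Ri 'r "nat list"

definition ksig :: "'r set \<Rightarrow> ('r \<Rightarrow> nat) \<Rightarrow> nat \<Rightarrow> 'r ksym set" where
  "ksig sig ar k =
     {TS j S | j S. 1 \<le> j \<and> j \<le> k \<and> S \<subseteq> {..<j}}
   \<union> {RS R S | R S. R \<in> sig \<and> S \<subseteq> {..<ar R}}
   \<union> {Ti j i | j i. 1 \<le> j \<and> j \<le> k \<and> 1 \<le> length i \<and> length i \<le> k \<and> set i \<subseteq> {..<j}}
   \<union> {Ri R i | R i. R \<in> sig \<and> 1 \<le> length i \<and> length i \<le> k \<and> set i \<subseteq> {..<ar R}}"

fun kar :: "'r ksym \<Rightarrow> nat" where
  "kar (TS j S) = 1"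
| "kar (RS R S) = 1"
| "kar (Ti j i) = 2"
| "kar (Ri R i) = 2"

definition tuples :: "'a set \<Rightarrow> nat \<Rightarrow> 'a list set" where
  "tuples A j = {a. length a = j \<and> set a \<subseteq> A}"

definition eq_on :: "nat set \<Rightarrow> 'a list \<Rightarrow> bool" where
  "eq_on S a \<longleftrightarrow> (\<forall>i\<in>S. \<forall>i'\<in>S. a ! i = a ! i')"

definition proj :: "nat list \<Rightarrow> 'a list \<Rightarrow> 'a list" where
  "proj i a = map (\<lambda>n. a ! n) i"

fun kpow_rels :: "('a, 'r) struc \<Rightarrow> 'r ksym \<Rightarrow> ('a list + 'r \<times> 'a list) list set" where
  "kpow_rels A (TS j S) = {[Inl a] | a. a \<in> tuples (univ A) j \<and> eq_on S a}"
| "kpow_rels A (RS R S) = {[Inr (R, a)] | a. a \<in> rels A R \<and> eq_on S a}"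
| "kpow_rels A (Ti j i) = {[Inl a, Inl (proj i a)] | a. a \<in> tuples (univ A) j}"
| "kpow_rels A (Ri R i) = {[Inr (R, a), Inl (proj i a)] | a. a \<in> rels A R}"

definition kpow :: "'r set \<Rightarrow> nat \<Rightarrow> ('a, 'r) struc \<Rightarrow> ('a list + 'r \<times> 'a list, 'r ksym) struc" where
  "kpow sig k A =
     \<lparr> univ = Inl ` (\<Union>j\<in>{1..k}. tuples (univ A) j) \<union> Inr ` constraints sig A,
       rels = kpow_rels A \<rparr>"

definition equivk :: "'r set \<Rightarrow> ('r \<Rightarrow> nat) \<Rightarrow> nat \<Rightarrow> ('a, 'r) struc \<Rightarrow> ('b, 'r) struc \<Rightarrow> bool" where
  "equivk sig ar k A B \<longleftrightarrow>
     (if k = 1 then equiv1 sig A B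
      else equiv1 (ksig sig ar k) (kpow sig k A) (kpow sig k B))"

text \<open>Assignments f from V to A are extensional functions in PiE V (univ A).
  p V f is the variable p_V(f); q c f is p_{R(x)}(f) for c = (R, x).\<close>
definition SA_feasible :: "'r set \<Rightarrow> nat \<Rightarrow> ('x, 'r) struc \<Rightarrow> ('a, 'r) struc \<Rightarrow> bool" where
  "SA_feasible sig k X A \<longleftrightarrow>
    (\<exists>(p :: 'x set \<Rightarrow> ('x \<Rightarrow> 'a) \<Rightarrow> rat) (q :: 'r \<times> 'x list \<Rightarrow> ('x \<Rightarrow> 'a) \<Rightarrow> rat).
       (\<forall>V f. V \<subseteq> univ X \<and> 1 \<le> card V \<and> card V \<le> k \<and> f \<in> V \<rightarrow>\<^sub>E univ A
              \<longrightarrow> 0 \<le> p V f \<and> p V f \<le> 1)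
     \<and> (\<forall>c\<in>constraints sig X. \<forall>f \<in> set (snd c) \<rightarrow>\<^sub>E univ A. 0 \<le> q c f \<and> q c f \<le> 1)
     \<and> (\<forall>V. V \<subseteq> univ X \<and> 1 \<le> card V \<and> card V \<le> k
              \<longrightarrow> (\<Sum>f \<in> V \<rightarrow>\<^sub>E univ A. p V f) = 1)
     \<and> (\<forall>U V f. U \<noteq> {} \<and> U \<subseteq> V \<and> V \<subseteq> univ X \<and> card V \<le> k \<and> f \<in> U \<rightarrow>\<^sub>E univ A
              \<longrightarrow> p U f = (\<Sum>g \<in> {g \<in> V \<rightarrow>\<^sub>E univ A. restrict g U = f}. p V g))
     \<and> (\<forall>c\<in>constraints sig X. \<forall>U f. U \<noteq> {} \<and> U \<subseteq> set (snd c) \<and> card U \<le> k \<and> f \<in> U \<rightarrow>\<^sub>E univ A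
              \<longrightarrow> p U f = (\<Sum>g \<in> {g \<in> set (snd c) \<rightarrow>\<^sub>E univ A. restrict g U = f}. q c g))
     \<and> (\<forall>c\<in>constraints sig X. \<forall>f \<in> set (snd c) \<rightarrow>\<^sub>E univ A.
              map f (snd c) \<notin> rels A (fst c) \<longrightarrow> q c f = 0))"

end

theory Submission
  imports Defs
begin

text \<open>
  \<open>SA\<^sup>k(X, A)\<close> is encoded as a system of constraints on the factor graph of \<open>X\<^sup>*\<^sup>k\<close> (of \<open>X\<close>
  itself when \<open>k = 1\<close>): every vertex carries a weighting of the tuples over \<open>A\<close>, and each
  vertex and each edge is constrained by a condition that depends only on whether the vertex is
  an element, resp. only on the label of the edge, and that is preserved under averaging.
  Vertices of equal colour have equal multisets of labelled neighbour colours, so for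
  \<open>X\<^sup>*\<^sup>k \<equiv>\<^sub>1 X'\<^sup>*\<^sup>k\<close> the edges with a given label between two colour classes form a
  biregular bipartite graph. Averaging a solution for \<open>X\<close> over the colour classes therefore
  gives a solution for \<open>X'\<close>, which decodes to a solution of \<open>SA\<^sup>k(X', A)\<close>.
\<close>

section \<open>Colour refinement\<close>

lemma count_image_mset_mset_set:
  assumes "finite S"
  shows "count (image_mset f (mset_set S)) y = card {x \<in> S. f x = y}"
proof -
  have "count (image_mset f (mset_set S)) y = card (f -` {y} \<inter> S)"
    using assms by (simp add: count_image_mset)
  also have "f -` {y} \<inter> S = {x \<in> S. f x = y}" by auto
  finally show ?thesis .
qed

lemma image_mset_inj_on_eq:
  assumes "inj_on f (set_mset M \<union> set_mset N)" and "image_mset f M = image_mset f N"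
  shows "M = N"
  using image_mset_eq_image_mset_plusD[of f M N "{#}"] assms by auto

lemma multiset_eq_if_levels_eq:
  fixes M N :: "('l \<times> (nat \<Rightarrow> 'c)) multiset"
  assumes levels: "\<And>j. image_mset (\<lambda>(l, s). (l, s j)) M = image_mset (\<lambda>(l, s). (l, s j)) N"
    and down: "\<And>l s j. (l, s) \<in># M + N \<Longrightarrow> s j = T j (s (Suc j))"
  shows "M = N"
proof -
  let ?F = "set_mset (M + N)"
  txt \<open>Sequences that differ somewhere differ at all higher levels, so one level \<open>J\<close>
    separates the finitely many sequences occurring in \<open>M\<close> and \<open>N\<close>.\<close>
  have agree_below: "s i = s' i"
    if ls: "(l, s) \<in> ?F" and ls': "(l', s') \<in> ?F" and "s j = s' j" "i \<le> j" for l s l' s' i j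
    using \<open>i \<le> j\<close> \<open>s j = s' j\<close>
  proof (induction rule: inc_induct)
    case (step n)
    then show ?case using down[of l s n] down[of l' s' n] ls ls' by simp
  qed
  have "\<forall>p\<in>?F \<times> ?F. eventually (\<lambda>j. snd (fst p) = snd (snd p) \<or> snd (fst p) j \<noteq> snd (snd p) j) sequentially"
  proof
    fix p assume "p \<in> ?F \<times> ?F"
    then obtain l s l' s' where p: "p = ((l, s), (l', s'))" "(l, s) \<in> ?F" "(l', s') \<in> ?F"
      by (metis mem_Times_iff prod.collapse)
    show "eventually (\<lambda>j. snd (fst p) = snd (snd p) \<or> snd (fst p) j \<noteq> snd (snd p) j) sequentially"
    proof (cases "s = s'")
      case False
      then obtain i where "s i \<noteq> s' i" by auto
      then have "s j \<noteq> s' j" if "i \<le> j" for j using agree_below[OF p(2,3) _ that] by blast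
      then show ?thesis using p(1) by (auto intro: eventually_sequentiallyI)
    qed (simp add: p(1))
  qed
  then have "eventually (\<lambda>j. \<forall>p\<in>?F \<times> ?F. snd (fst p) = snd (snd p) \<or> snd (fst p) j \<noteq> snd (snd p) j) sequentially"
    by (intro eventually_ball_finite) simp_all
  then obtain J where J: "\<forall>p\<in>?F \<times> ?F. snd (fst p) = snd (snd p) \<or> snd (fst p) J \<noteq> snd (snd p) J"
    by (auto simp: eventually_sequentially)
  have "inj_on (\<lambda>(l, s). (l, s J)) ?F"
  proof (rule inj_onI)
    fix x y assume "x \<in> ?F" "y \<in> ?F" "(\<lambda>(l, s). (l, s J)) x = (\<lambda>(l, s). (l, s J)) y"
    then show "x = y" using J[rule_format, of "(x, y)"] by (auto simp: split_beta prod_eq_iff)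
  qed
  then show ?thesis
    using image_mset_inj_on_eq levels by (metis set_mset_union)
qed

definition wf_factor_graph :: "'r set \<Rightarrow> ('a, 'r) struc \<Rightarrow> bool" where
  "wf_factor_graph sig A \<longleftrightarrow> finite (univ A) \<and> finite (constraints sig A) \<and>
     (\<forall>c\<in>constraints sig A. snd c \<noteq> [] \<and> set (snd c) \<subseteq> univ A)"

lemma wf_factor_graphD:
  assumes "wf_factor_graph sig A"
  shows "finite (univ A)" "finite (constraints sig A)"
    and "c \<in> constraints sig A \<Longrightarrow> snd c \<noteq> []"
    and "c \<in> constraints sig A \<Longrightarrow> set (snd c) \<subseteq> univ A"
  using assms by (auto simp: wf_factor_graph_def)

lemma finite_fg_vertices: "wf_factor_graph sig A \<Longrightarrow> finite (fg_vertices sig A)"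
  by (simp add: fg_vertices_def wf_factor_graphD)

text \<open>A colour of level \<open>j + 1\<close> determines the colour of level \<open>j\<close> of the same vertex. At
  level 1 a constraint sees at least one element, so the base symbol can be recovered.\<close>

fun trunc_colour :: "nat \<Rightarrow> 'l colour \<Rightarrow> 'l colour" where
  "trunc_colour j (Col0 b) = Col0 b"
| "trunc_colour 0 (ColN M) = Col0 (\<forall>e\<in>#M. snd e = Col0 False)"
| "trunc_colour (Suc j) (ColN M) = ColN (image_mset (\<lambda>(l, c). (l, trunc_colour j c)) M)"

lemma trunc_colour_delta:
  assumes wf: "wf_factor_graph sig A" and v: "v \<in> fg_vertices sig A"
  shows "trunc_colour j (delta sig A (Suc j) v) = delta sig A j v"
  using v
proof (induction j arbitrary: v)
  case 0
  show ?case
  proof (cases v)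
    case (Inr c)
    then have "snd c \<noteq> []" using 0 wf_factor_graphD(3)[OF wf] by (auto simp: fg_vertices_def)
    then obtain a where "a \<in> set (snd c)" by (cases "snd c") auto
    then show ?thesis using Inr by force
  qed auto
next
  case (Suc j)
  have IH: "trunc_colour j (delta sig A (Suc j) w) = delta sig A j w" if "w \<in> fg_vertices sig A" for w
    using Suc.IH[OF that] .
  show ?case
  proof (cases v)
    case (Inl a)
    let ?N = "mset_set {c \<in> constraints sig A. a \<in> set (snd c)}"
    have "Inr c \<in> fg_vertices sig A" if "c \<in># ?N" for c
      using that wf_factor_graphD(2)[OF wf] by (simp add: fg_vertices_def)
    then have "image_mset (\<lambda>c. (edge_label a c, trunc_colour j (delta sig A (Suc j) (Inr c)))) ?N
        = image_mset (\<lambda>c. (edge_label a c, delta sig A j (Inr c))) ?N"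
      by (intro image_mset_cong) (metis IH)
    then show ?thesis using Inl by (simp only: delta.simps trunc_colour.simps multiset.map_comp o_def case_prod_conv)
  next
    case (Inr c)
    then have "set (snd c) \<subseteq> univ A"
      using Suc.prems wf_factor_graphD(4)[OF wf] by (auto simp: fg_vertices_def)
    then have "Inl a \<in> fg_vertices sig A" if "a \<in># mset_set (set (snd c))" for a
      using that by (auto simp: fg_vertices_def)
    then have "image_mset (\<lambda>a. (edge_label a c, trunc_colour j (delta sig A (Suc j) (Inl a)))) (mset_set (set (snd c)))
        = image_mset (\<lambda>a. (edge_label a c, delta sig A j (Inl a))) (mset_set (set (snd c)))"
      by (intro image_mset_cong) (metis IH)
    then show ?thesis using Inr by (simp only: delta.simps trunc_colour.simps multiset.map_comp o_def case_prod_conv)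
  qed
qed

definition elem_nbrs ::
  "'r set \<Rightarrow> ('a, 'r) struc \<Rightarrow> 'a \<Rightarrow> ((nat set \<times> 'r) \<times> (nat \<Rightarrow> (nat set \<times> 'r) colour)) multiset" where
  "elem_nbrs sig A a = image_mset (\<lambda>c. (edge_label a c, delta_seq sig A (Inr c)))
     (mset_set {c \<in> constraints sig A. a \<in> set (snd c)})"

definition cons_nbrs ::
  "'r set \<Rightarrow> ('a, 'r) struc \<Rightarrow> 'r \<times> 'a list \<Rightarrow> ((nat set \<times> 'r) \<times> (nat \<Rightarrow> (nat set \<times> 'r) colour)) multiset" where
  "cons_nbrs sig A c = image_mset (\<lambda>a. (edge_label a c, delta_seq sig A (Inl a))) (mset_set (set (snd c)))"

lemma delta_Suc_Inl_elem_nbrs: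
  "delta sig A (Suc j) (Inl a) = ColN (image_mset (\<lambda>(l, s). (l, s j)) (elem_nbrs sig A a))"
  by (simp add: elem_nbrs_def multiset.map_comp o_def delta_seq_def)

lemma delta_Suc_Inr_cons_nbrs:
  "delta sig A (Suc j) (Inr c) = ColN (image_mset (\<lambda>(l, s). (l, s j)) (cons_nbrs sig A c))"
  by (simp add: cons_nbrs_def multiset.map_comp o_def delta_seq_def)

lemma elem_nbrs_trunc_colour:
  assumes "wf_factor_graph sig A" and "(l, s) \<in># elem_nbrs sig A a"
  shows "s j = trunc_colour j (s (Suc j))"
proof -
  obtain c where "c \<in> constraints sig A" "s = delta_seq sig A (Inr c)"
    using assms by (auto simp: elem_nbrs_def wf_factor_graphD)
  then show ?thesis
    using trunc_colour_delta[OF assms(1), of "Inr c" j] by (simp add: delta_seq_def fg_vertices_def del: delta.simps)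
qed

lemma cons_nbrs_trunc_colour:
  assumes "wf_factor_graph sig A" and "c \<in> constraints sig A" and "(l, s) \<in># cons_nbrs sig A c"
  shows "s j = trunc_colour j (s (Suc j))"
proof -
  obtain a where "a \<in> univ A" "s = delta_seq sig A (Inl a)"
    using assms wf_factor_graphD(4)[OF assms(1,2)] by (auto simp: cons_nbrs_def)
  then show ?thesis
    using trunc_colour_delta[OF assms(1), of "Inl a" j] by (simp add: delta_seq_def fg_vertices_def del: delta.simps)
qed

lemma elem_nbrs_eq_if_delta_seq_eq:
  assumes "wf_factor_graph sig Y" "wf_factor_graph sig Z"
    and "delta_seq sig Y (Inl a) = delta_seq sig Z (Inl b)"
  shows "elem_nbrs sig Y a = elem_nbrs sig Z b"
proof (rule multiset_eq_if_levels_eq[where T = trunc_colour])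
  fix j
  have "delta sig Y (Suc j) (Inl a) = delta sig Z (Suc j) (Inl b)"
    using assms(3) by (metis delta_seq_def)
  then show "image_mset (\<lambda>(l, s). (l, s j)) (elem_nbrs sig Y a) = image_mset (\<lambda>(l, s). (l, s j)) (elem_nbrs sig Z b)"
    by (simp only: delta_Suc_Inl_elem_nbrs colour.inject)
next
  fix l s j assume "(l, s) \<in># elem_nbrs sig Y a + elem_nbrs sig Z b"
  then show "s j = trunc_colour j (s (Suc j))"
    using elem_nbrs_trunc_colour assms(1,2) by (metis union_iff)
qed

lemma cons_nbrs_eq_if_delta_seq_eq:
  assumes "wf_factor_graph sig Y" "wf_factor_graph sig Z"
    and "c \<in> constraints sig Y" "d \<in> constraints sig Z"
    and "delta_seq sig Y (Inr c) = delta_seq sig Z (Inr d)"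
  shows "cons_nbrs sig Y c = cons_nbrs sig Z d"
proof (rule multiset_eq_if_levels_eq[where T = trunc_colour])
  fix j
  have "delta sig Y (Suc j) (Inr c) = delta sig Z (Suc j) (Inr d)"
    using assms(5) by (metis delta_seq_def)
  then show "image_mset (\<lambda>(l, s). (l, s j)) (cons_nbrs sig Y c) = image_mset (\<lambda>(l, s). (l, s j)) (cons_nbrs sig Z d)"
    by (simp only: delta_Suc_Inr_cons_nbrs colour.inject)
next
  fix l s j assume "(l, s) \<in># cons_nbrs sig Y c + cons_nbrs sig Z d"
  then show "s j = trunc_colour j (s (Suc j))"
    using cons_nbrs_trunc_colour assms(1-4) by (metis union_iff)
qed

lemma count_elem_nbrs_pos:
  assumes "wf_factor_graph sig A" "c \<in> constraints sig A" "a \<in> set (snd c)"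
  shows "count (elem_nbrs sig A a) (edge_label a c, delta_seq sig A (Inr c)) > 0"
  using assms by (auto simp: elem_nbrs_def wf_factor_graphD)

lemma count_cons_nbrs_pos:
  assumes "a \<in> set (snd c)"
  shows "count (cons_nbrs sig A c) (edge_label a c, delta_seq sig A (Inl a)) > 0"
  using assms by (auto simp: cons_nbrs_def)

lemma delta_seq_eq_imp_isl_eq: "delta_seq sig Y u = delta_seq sig' Z v \<Longrightarrow> isl u = isl v"
  by (metis delta.simps(1) colour.inject delta_seq_def)

section \<open>Averaging solutions over colour classes\<close>

definition avg :: "('i \<Rightarrow> 'h \<Rightarrow> 'a::linordered_field) \<Rightarrow> 'i set \<Rightarrow> 'h \<Rightarrow> 'a" where
  "avg F S h = (\<Sum>i\<in>S. F i h) / of_nat (card S)"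

lemma avg_bounds:
  assumes "finite S" "S \<noteq> {}" "\<forall>i\<in>S. 0 \<le> F i h \<and> F i h \<le> 1"
  shows "0 \<le> avg F S h \<and> avg F S h \<le> 1"
proof -
  have "0 \<le> (\<Sum>i\<in>S. F i h)" "(\<Sum>i\<in>S. F i h) \<le> of_nat (card S)"
    using assms(3) sum_mono[of S "\<lambda>i. F i h" "\<lambda>_. 1"] by (auto intro: sum_nonneg)
  then show ?thesis using assms(1,2) by (simp add: avg_def divide_le_eq card_gt_0_iff)
qed

lemma avg_eq_0: "\<forall>i\<in>S. F i h = 0 \<Longrightarrow> avg F S h = 0"
  by (simp add: avg_def)

lemma sum_avg:
  assumes "finite H"
  shows "(\<Sum>h\<in>H. avg F S h) = (\<Sum>i\<in>S. \<Sum>h\<in>H. F i h) / of_nat (card S)"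
  using assms by (simp add: avg_def sum_divide_distrib[symmetric] sum.swap[of _ H])

lemma sum_avg_const:
  assumes "finite S" "S \<noteq> {}" "finite H" "\<forall>i\<in>S. (\<Sum>h\<in>H. F i h) = c"
  shows "(\<Sum>h\<in>H. avg F S h) = c"
  using assms by (simp add: sum_avg card_gt_0_iff)

lemma avg_sum_commute:
  assumes "finite H" "\<forall>i\<in>S. F i h' = (\<Sum>h\<in>H. G i h)"
  shows "avg F S h' = (\<Sum>h\<in>H. avg G S h)"
  unfolding sum_avg[OF assms(1)] using assms(2) by (simp add: avg_def)

lemma avg_reindex: "inj_on g S \<Longrightarrow> avg F (g ` S) = avg (\<lambda>i. F (g i)) S"
  by (simp add: avg_def fun_eq_iff sum.reindex card_image)

lemma avg_fst_regular:
  assumes "finite D" "Ed \<subseteq> D \<times> E" "\<And>a. a \<in> D \<Longrightarrow> card {c. (a, c) \<in> Ed} = m" "m > 0"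
  shows "avg (\<lambda>e. F (fst e)) Ed = avg F D"
proof
  fix h
  have fibres: "Ed = Sigma D (\<lambda>a. {c. (a, c) \<in> Ed})" using assms(2) by auto
  have fin: "finite {c. (a, c) \<in> Ed}" if "a \<in> D" for a
    using assms(3,4) that card.infinite by fastforce
  have "(\<Sum>e\<in>Ed. F (fst e) h) = (\<Sum>a\<in>D. \<Sum>c\<in>{c. (a, c) \<in> Ed}. F a h)"
    using sum.Sigma[OF assms(1), of "\<lambda>a. {c. (a, c) \<in> Ed}" "\<lambda>a c. F a h"] fin fibres
    by (simp add: split_def)
  also have "\<dots> = (\<Sum>a\<in>D. of_nat m * F a h)"
    using assms(3) by simp
  moreover have "card Ed = m * card D"
    by (subst fibres) (simp add: assms fin)
  ultimately show "avg (\<lambda>e. F (fst e)) Ed h = avg F D h"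
    using assms(4) by (simp add: avg_def sum_distrib_left[symmetric])
qed

lemma avg_snd_regular:
  assumes "finite E" "Ed \<subseteq> D \<times> E" "\<And>c. c \<in> E \<Longrightarrow> card {a. (a, c) \<in> Ed} = n" "n > 0"
  shows "avg (\<lambda>e. G (snd e)) Ed = avg G E"
proof -
  have "avg (\<lambda>e. G (snd e)) Ed = avg (\<lambda>e. G (fst e)) (prod.swap ` Ed)"
    by (simp add: avg_reindex)
  also have "\<dots> = avg G E"
  proof (rule avg_fst_regular[OF assms(1) _ _ assms(4)])
    show "prod.swap ` Ed \<subseteq> E \<times> D" using assms(2) by auto
    fix c assume "c \<in> E"
    have "{a. (c, a) \<in> prod.swap ` Ed} = {a. (a, c) \<in> Ed}" by auto
    then show "card {a. (c, a) \<in> prod.swap ` Ed} = n" using assms(3)[OF \<open>c \<in> E\<close>] by simp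
  qed
  finally show ?thesis .
qed

definition fg_solution :: "'r set \<Rightarrow> ('u, 'r) struc \<Rightarrow> (bool \<Rightarrow> 'w \<Rightarrow> bool) \<Rightarrow>
    (nat set \<times> 'r \<Rightarrow> 'w \<Rightarrow> 'w \<Rightarrow> bool) \<Rightarrow> ('u + 'r \<times> 'u list \<Rightarrow> 'w) \<Rightarrow> bool" where
  "fg_solution sig Y Psi Lam P \<longleftrightarrow>
     (\<forall>v\<in>fg_vertices sig Y. Psi (isl v) (P v)) \<and>
     (\<forall>c\<in>constraints sig Y. \<forall>a\<in>set (snd c). Lam (edge_label a c) (P (Inl a)) (P (Inr c)))"

locale equiv1_factor_graphs =
  fixes sig :: "'r set" and Y :: "('u, 'r) struc" and Z :: "('v, 'r) struc"
  assumes wf_Y: "wf_factor_graph sig Y" and wf_Z: "wf_factor_graph sig Z"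
    and equiv: "equiv1 sig Y Z"
begin

definition colour_class :: "'v + 'r \<times> 'v list \<Rightarrow> ('u + 'r \<times> 'u list) set" where
  "colour_class v = {u \<in> fg_vertices sig Y. delta_seq sig Y u = delta_seq sig Z v}"

definition elem_class :: "'v \<Rightarrow> 'u set" where
  "elem_class b = {a \<in> univ Y. delta_seq sig Y (Inl a) = delta_seq sig Z (Inl b)}"

definition cons_class :: "'r \<times> 'v list \<Rightarrow> ('r \<times> 'u list) set" where
  "cons_class d = {c \<in> constraints sig Y. delta_seq sig Y (Inr c) = delta_seq sig Z (Inr d)}"

definition class_edges :: "'v \<Rightarrow> 'r \<times> 'v list \<Rightarrow> ('u \<times> ('r \<times> 'u list)) set" where
  "class_edges b d = {(a, c). a \<in> elem_class b \<and> c \<in> cons_class d \<and>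
     a \<in> set (snd c) \<and> edge_label a c = edge_label b d}"

lemma finite_colour_class: "finite (colour_class v)"
  using finite_fg_vertices[OF wf_Y] by (simp add: colour_class_def)

lemma colour_class_nonempty:
  assumes "v \<in> fg_vertices sig Z"
  shows "colour_class v \<noteq> {}"
proof -
  have "delta_seq sig Z v \<in># image_mset (delta_seq sig Z) (mset_set (fg_vertices sig Z))"
    using assms finite_fg_vertices[OF wf_Z] by simp
  then have "delta_seq sig Z v \<in># image_mset (delta_seq sig Y) (mset_set (fg_vertices sig Y))"
    using equiv by (simp add: equiv1_def)
  then show ?thesis using finite_fg_vertices[OF wf_Y] by (auto simp: colour_class_def)
qed

lemma colour_class_Inl: "colour_class (Inl b) = Inl ` elem_class b"
  by (auto simp: colour_class_def elem_class_def fg_vertices_def dest: delta_seq_eq_imp_isl_eq)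

lemma colour_class_Inr: "colour_class (Inr d) = Inr ` cons_class d"
  by (auto simp: colour_class_def cons_class_def fg_vertices_def dest: delta_seq_eq_imp_isl_eq)

lemma card_class_edges_at_elem:
  assumes "a \<in> elem_class b"
  shows "card {c. (a, c) \<in> class_edges b d} = count (elem_nbrs sig Z b) (edge_label b d, delta_seq sig Z (Inr d))"
    (is "_ = count _ ?x")
proof -
  have "count (elem_nbrs sig Z b) ?x = count (elem_nbrs sig Y a) ?x"
    using assms elem_nbrs_eq_if_delta_seq_eq[OF wf_Y wf_Z] by (simp add: elem_class_def)
  also have "\<dots> = card {c \<in> {c \<in> constraints sig Y. a \<in> set (snd c)}.
      (edge_label a c, delta_seq sig Y (Inr c)) = ?x}"
    unfolding elem_nbrs_def using wf_factor_graphD(2)[OF wf_Y] by (intro count_image_mset_mset_set) simp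
  also have "{c \<in> {c \<in> constraints sig Y. a \<in> set (snd c)}. (edge_label a c, delta_seq sig Y (Inr c)) = ?x}
      = {c. (a, c) \<in> class_edges b d}"
    using assms by (auto simp: class_edges_def cons_class_def)
  finally show ?thesis by simp
qed

lemma card_class_edges_at_cons:
  assumes "d \<in> constraints sig Z" and "c \<in> cons_class d"
  shows "card {a. (a, c) \<in> class_edges b d} = count (cons_nbrs sig Z d) (edge_label b d, delta_seq sig Z (Inl b))"
    (is "_ = count _ ?x")
proof -
  have c: "c \<in> constraints sig Y" "delta_seq sig Y (Inr c) = delta_seq sig Z (Inr d)"
    using assms(2) by (auto simp: cons_class_def)
  have "count (cons_nbrs sig Z d) ?x = count (cons_nbrs sig Y c) ?x"
    using cons_nbrs_eq_if_delta_seq_eq[OF wf_Y wf_Z c(1) assms(1) c(2)] by simp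
  also have "\<dots> = card {a \<in> set (snd c). (edge_label a c, delta_seq sig Y (Inl a)) = ?x}"
    unfolding cons_nbrs_def by (intro count_image_mset_mset_set) simp
  also have "{a \<in> set (snd c). (edge_label a c, delta_seq sig Y (Inl a)) = ?x} = {a. (a, c) \<in> class_edges b d}"
    using assms(2) wf_factor_graphD(4)[OF wf_Y c(1)] by (auto simp: class_edges_def elem_class_def)
  finally show ?thesis by simp
qed

lemma finite_class_edges: "finite (class_edges b d)"
proof (rule finite_subset)
  show "class_edges b d \<subseteq> elem_class b \<times> cons_class d" by (auto simp: class_edges_def)
  show "finite (elem_class b \<times> cons_class d)"
    using wf_factor_graphD(1,2)[OF wf_Y] by (simp add: elem_class_def cons_class_def)
qed

lemma class_edges_nonempty:
  assumes "d \<in> constraints sig Z" and "b \<in> set (snd d)"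
  shows "class_edges b d \<noteq> {}"
proof -
  have "Inl b \<in> fg_vertices sig Z"
    using assms wf_factor_graphD(4)[OF wf_Z assms(1)] by (auto simp: fg_vertices_def)
  then obtain a where a: "a \<in> elem_class b"
    using colour_class_nonempty colour_class_Inl by fastforce
  have "card {c. (a, c) \<in> class_edges b d} > 0"
    using card_class_edges_at_elem[OF a] count_elem_nbrs_pos[OF wf_Z assms] by simp
  then show ?thesis by (auto simp: card_gt_0_iff)
qed

definition avg_assignment ::
  "('u + 'r \<times> 'u list \<Rightarrow> 'h \<Rightarrow> 'a::linordered_field) \<Rightarrow> 'v + 'r \<times> 'v list \<Rightarrow> 'h \<Rightarrow> 'a" where
  "avg_assignment P v = avg P (colour_class v)"

lemma avg_assignment_Inl_class_edges:
  assumes "d \<in> constraints sig Z" and "b \<in> set (snd d)"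
  shows "avg_assignment P (Inl b) = avg (\<lambda>e. P (Inl (fst e))) (class_edges b d)"
proof -
  have "avg_assignment P (Inl b) = avg (\<lambda>a. P (Inl a)) (elem_class b)"
    by (simp add: avg_assignment_def colour_class_Inl avg_reindex)
  also have "\<dots> = avg (\<lambda>e. P (Inl (fst e))) (class_edges b d)"
  proof (rule sym, rule avg_fst_regular)
    show "finite (elem_class b)" using wf_factor_graphD(1)[OF wf_Y] by (simp add: elem_class_def)
    show "class_edges b d \<subseteq> elem_class b \<times> cons_class d" by (auto simp: class_edges_def)
    show "card {c. (a, c) \<in> class_edges b d} = count (elem_nbrs sig Z b) (edge_label b d, delta_seq sig Z (Inr d))"
      if "a \<in> elem_class b" for a
      using card_class_edges_at_elem[OF that] .
  qed (rule count_elem_nbrs_pos[OF wf_Z assms])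
  finally show ?thesis .
qed

lemma avg_assignment_Inr_class_edges:
  assumes "d \<in> constraints sig Z" and "b \<in> set (snd d)"
  shows "avg_assignment P (Inr d) = avg (\<lambda>e. P (Inr (snd e))) (class_edges b d)"
proof -
  have "avg_assignment P (Inr d) = avg (\<lambda>c. P (Inr c)) (cons_class d)"
    by (simp add: avg_assignment_def colour_class_Inr avg_reindex)
  also have "\<dots> = avg (\<lambda>e. P (Inr (snd e))) (class_edges b d)"
  proof (rule sym, rule avg_snd_regular)
    show "finite (cons_class d)" using wf_factor_graphD(2)[OF wf_Y] by (simp add: cons_class_def)
    show "class_edges b d \<subseteq> elem_class b \<times> cons_class d" by (auto simp: class_edges_def)
    show "card {a. (a, c) \<in> class_edges b d} = count (cons_nbrs sig Z d) (edge_label b d, delta_seq sig Z (Inl b))"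
      if "c \<in> cons_class d" for c
      using card_class_edges_at_cons[OF assms(1) that] .
  qed (rule count_cons_nbrs_pos[OF assms(2)])
  finally show ?thesis .
qed

theorem fg_solution_avg_assignment:
  fixes Psi :: "bool \<Rightarrow> ('h \<Rightarrow> 'a::linordered_field) \<Rightarrow> bool"
  assumes Psi_avg: "\<And>\<beta> (S :: ('u + 'r \<times> 'u list) set) F.
      finite S \<Longrightarrow> S \<noteq> {} \<Longrightarrow> \<forall>i\<in>S. Psi \<beta> (F i) \<Longrightarrow> Psi \<beta> (avg F S)"
    and Lam_avg: "\<And>l (S :: ('u \<times> ('r \<times> 'u list)) set) F G.
      finite S \<Longrightarrow> S \<noteq> {} \<Longrightarrow> \<forall>i\<in>S. Lam l (F i) (G i) \<Longrightarrow> Lam l (avg F S) (avg G S)"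
    and sol: "fg_solution sig Y Psi Lam P"
  shows "fg_solution sig Z Psi Lam (avg_assignment P)"
  unfolding fg_solution_def
proof (intro conjI ballI)
  fix v assume v: "v \<in> fg_vertices sig Z"
  have "Psi (isl v) (P u)" if "u \<in> colour_class v" for u
    using that sol delta_seq_eq_imp_isl_eq by (fastforce simp: colour_class_def fg_solution_def)
  then show "Psi (isl v) (avg_assignment P v)"
    unfolding avg_assignment_def using Psi_avg finite_colour_class colour_class_nonempty[OF v] by blast
next
  fix d b assume d: "d \<in> constraints sig Z" and b: "b \<in> set (snd d)"
  let ?E = "class_edges b d"
  have "Lam (edge_label b d) (P (Inl a)) (P (Inr c))" if "(a, c) \<in> ?E" for a c
  proof -
    have "c \<in> constraints sig Y" "a \<in> set (snd c)" "edge_label a c = edge_label b d"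
      using that by (auto simp: class_edges_def cons_class_def)
    then show ?thesis using sol unfolding fg_solution_def by metis
  qed
  then have "Lam (edge_label b d) (avg (\<lambda>e. P (Inl (fst e))) ?E) (avg (\<lambda>e. P (Inr (snd e))) ?E)"
    by (intro Lam_avg[OF finite_class_edges class_edges_nonempty[OF d b]]) auto
  then show "Lam (edge_label b d) (avg_assignment P (Inl b)) (avg_assignment P (Inr d))"
    unfolding avg_assignment_Inl_class_edges[OF d b] avg_assignment_Inr_class_edges[OF d b] .
qed

end

section \<open>Assignments as tuples\<close>

text \<open>An assignment \<open>f\<close> on the entries of a list \<open>t\<close> is represented by the tuple \<open>map f t\<close>; these
  are exactly the tuples that repeat entries wherever \<open>t\<close> does.\<close>

definition consistent :: "'x list \<Rightarrow> 'a list \<Rightarrow> bool" where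
  "consistent t h \<longleftrightarrow> length h = length t \<and> (\<forall>i<length t. \<forall>j<length t. t ! i = t ! j \<longrightarrow> h ! i = h ! j)"

definition first_pos :: "'x list \<Rightarrow> 'x \<Rightarrow> nat" where
  "first_pos t y = (LEAST i. i < length t \<and> t ! i = y)"

definition tuple_assignment :: "'x list \<Rightarrow> 'a list \<Rightarrow> 'x \<Rightarrow> 'a" where
  "tuple_assignment t h = (\<lambda>y\<in>set t. h ! first_pos t y)"

definition tuple_weight :: "'a set \<Rightarrow> 'x list \<Rightarrow> (('x \<Rightarrow> 'a) \<Rightarrow> 'b::zero) \<Rightarrow> 'a list \<Rightarrow> 'b" where
  "tuple_weight B t F h = (if h \<in> tuples B (length t) \<and> consistent t h then F (tuple_assignment t h) else 0)"

lemma finite_tuples: "finite B \<Longrightarrow> finite (tuples B n)"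
  using finite_lists_length_eq[of B n] by (simp add: tuples_def conj_commute)

lemma first_pos:
  assumes "y \<in> set t"
  shows "first_pos t y < length t" and "t ! first_pos t y = y"
proof -
  have "\<exists>i. i < length t \<and> t ! i = y" using assms by (simp add: in_set_conv_nth)
  then have "first_pos t y < length t \<and> t ! first_pos t y = y"
    unfolding first_pos_def by (rule LeastI_ex)
  then show "first_pos t y < length t" "t ! first_pos t y = y" by auto
qed

lemma map_tuple_assignment:
  assumes "consistent t h"
  shows "map (tuple_assignment t h) t = h"
proof (rule nth_equalityI)
  show "length (map (tuple_assignment t h) t) = length h" using assms unfolding consistent_def by simp
  fix i assume "i < length (map (tuple_assignment t h) t)"
  then have i: "i < length t" by simp
  then have "t ! i \<in> set t" by simp
  then have "h ! first_pos t (t ! i) = h ! i"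
    using assms i first_pos[of "t ! i" t] unfolding consistent_def by metis
  then show "map (tuple_assignment t h) t ! i = h ! i"
    using i by (simp add: tuple_assignment_def)
qed

lemma tuple_assignment_map:
  assumes "f \<in> set t \<rightarrow>\<^sub>E B"
  shows "tuple_assignment t (map f t) = f"
proof
  fix y show "tuple_assignment t (map f t) y = f y"
    using assms first_pos[of y t] by (cases "y \<in> set t") (auto simp: tuple_assignment_def PiE_def extensional_def)
qed

lemma consistent_map: "consistent t (map f t)"
  by (simp add: consistent_def)

lemma map_in_tuples: "f \<in> set t \<rightarrow>\<^sub>E B \<Longrightarrow> map f t \<in> tuples B (length t)"
  by (auto simp: tuples_def)

lemma tuple_assignment_PiE:
  assumes "h \<in> tuples B (length t)"
  shows "tuple_assignment t h \<in> set t \<rightarrow>\<^sub>E B"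
proof -
  have "h ! first_pos t y \<in> B" if "y \<in> set t" for y
    using first_pos(1)[OF that] assms by (auto simp: tuples_def)
  then show ?thesis by (simp add: tuple_assignment_def)
qed

lemma bij_betw_map_consistent_tuples:
  "bij_betw (\<lambda>f. map f t) (set t \<rightarrow>\<^sub>E B) {h \<in> tuples B (length t). consistent t h}"
proof (rule bij_betw_byWitness[where f' = "tuple_assignment t"])
  show "tuple_assignment t ` {h \<in> tuples B (length t). consistent t h} \<subseteq> set t \<rightarrow>\<^sub>E B"
    using tuple_assignment_PiE by blast
qed (auto simp: tuple_assignment_map map_tuple_assignment map_in_tuples consistent_map)

lemma sum_tuples_eq_sum_PiE:
  assumes "finite B" and "\<And>h. h \<in> tuples B (length t) \<Longrightarrow> \<not> consistent t h \<Longrightarrow> G h = 0"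
  shows "(\<Sum>h\<in>tuples B (length t). G h) = (\<Sum>f\<in>set t \<rightarrow>\<^sub>E B. G (map f t))"
proof -
  have "(\<Sum>h\<in>tuples B (length t). G h) = (\<Sum>h\<in>{h \<in> tuples B (length t). consistent t h}. G h)"
    using assms by (intro sum.mono_neutral_right) (auto simp: finite_tuples)
  also have "\<dots> = (\<Sum>f\<in>set t \<rightarrow>\<^sub>E B. G (map f t))"
    by (rule sum.reindex_bij_betw[OF bij_betw_map_consistent_tuples, symmetric])
  finally show ?thesis .
qed

lemma tuple_weight_map: "f \<in> set t \<rightarrow>\<^sub>E B \<Longrightarrow> tuple_weight B t F (map f t) = F f"
  by (simp add: tuple_weight_def map_in_tuples consistent_map tuple_assignment_map)

lemma tuple_weight_inconsistent: "\<not> consistent t h \<Longrightarrow> tuple_weight B t F h = 0"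
  by (simp add: tuple_weight_def)

lemma sum_tuple_weight:
  assumes "finite B"
  shows "(\<Sum>h\<in>tuples B (length t). tuple_weight B t F h) = (\<Sum>f\<in>set t \<rightarrow>\<^sub>E B. F f)"
  using sum_tuples_eq_sum_PiE[OF assms, of t "tuple_weight B t F"]
  by (simp add: tuple_weight_inconsistent tuple_weight_map)

lemma tuple_weight_bounds:
  fixes F :: "('x \<Rightarrow> 'a) \<Rightarrow> 'b::linordered_semidom"
  assumes "\<And>f. f \<in> set t \<rightarrow>\<^sub>E B \<Longrightarrow> 0 \<le> F f \<and> F f \<le> 1"
  shows "0 \<le> tuple_weight B t F h \<and> tuple_weight B t F h \<le> 1"
  using assms tuple_assignment_PiE[of h B t] by (simp add: tuple_weight_def)

lemma tuple_weight_eq_0_if_not_eq_on: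
  assumes "eq_on S t" "S \<subseteq> {..<length t}" "\<not> eq_on S h"
  shows "tuple_weight B t F h = 0"
proof (rule tuple_weight_inconsistent, rule notI)
  assume h: "consistent t h"
  have "h ! i = h ! i'" if "i \<in> S" "i' \<in> S" for i i'
  proof -
    have "i < length t" "i' < length t" using that assms(2) by auto
    moreover have "t ! i = t ! i'" using that assms(1) unfolding eq_on_def by blast
    ultimately show ?thesis using h unfolding consistent_def by blast
  qed
  then show False using assms(3) unfolding eq_on_def by blast
qed

lemma tuple_weight_eq_0_if_not_in:
  assumes "\<And>f. f \<in> set t \<rightarrow>\<^sub>E B \<Longrightarrow> map f t \<notin> Rel \<Longrightarrow> F f = 0" and "h \<notin> Rel"
  shows "tuple_weight B t F h = 0"
  using assms tuple_assignment_PiE map_tuple_assignment by (fastforce simp: tuple_weight_def)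

lemma length_proj [simp]: "length (proj i t) = length i"
  by (simp add: proj_def)

lemma proj_map: "set i \<subseteq> {..<length t} \<Longrightarrow> proj i (map g t) = map g (proj i t)"
  by (auto simp: proj_def subset_iff)

lemma set_proj_subset: "set i \<subseteq> {..<length t} \<Longrightarrow> set (proj i t) \<subseteq> set t"
  by (auto simp: proj_def subset_iff)

lemma proj_in_tuples: "h \<in> tuples B n \<Longrightarrow> set i \<subseteq> {..<n} \<Longrightarrow> proj i h \<in> tuples B (length i)"
  by (auto simp: tuples_def proj_def subset_iff)

lemma consistent_proj: "consistent t h \<Longrightarrow> set i \<subseteq> {..<length t} \<Longrightarrow> consistent (proj i t) (proj i h)"
  by (auto simp: consistent_def proj_def subset_iff)

lemma restrict_eq_iff_map_eq:
  assumes "f \<in> set s \<rightarrow>\<^sub>E B" and "set s \<subseteq> set t"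
  shows "restrict g (set s) = f \<longleftrightarrow> map g s = map f s"
proof
  assume "map g s = map f s"
  then show "restrict g (set s) = f"
    using assms(1) by (auto simp: fun_eq_iff PiE_def extensional_def)
qed auto

lemma sum_proj_eq_sum_restrict:
  assumes "finite B" and "\<And>h. h \<in> tuples B (length t) \<Longrightarrow> \<not> consistent t h \<Longrightarrow> G h = 0"
    and i: "set i \<subseteq> {..<length t}" and f: "f \<in> set (proj i t) \<rightarrow>\<^sub>E B"
  shows "(\<Sum>h\<in>{h \<in> tuples B (length t). proj i h = map f (proj i t)}. G h)
       = (\<Sum>g\<in>{g \<in> set t \<rightarrow>\<^sub>E B. restrict g (set (proj i t)) = f}. G (map g t))"
proof -
  let ?s = "proj i t"
  have "(\<Sum>h\<in>{h \<in> tuples B (length t). proj i h = map f ?s}. G h)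
      = (\<Sum>h\<in>tuples B (length t). if proj i h = map f ?s then G h else 0)"
    using assms(1) by (simp add: sum.inter_filter finite_tuples)
  also have "\<dots> = (\<Sum>g\<in>set t \<rightarrow>\<^sub>E B. if proj i (map g t) = map f ?s then G (map g t) else 0)"
    using assms(2) by (intro sum_tuples_eq_sum_PiE[OF assms(1)]) auto
  also have "\<dots> = (\<Sum>g\<in>set t \<rightarrow>\<^sub>E B. if restrict g (set ?s) = f then G (map g t) else 0)"
    using restrict_eq_iff_map_eq[OF f set_proj_subset[OF i]] by (simp add: proj_map[OF i])
  also have "\<dots> = (\<Sum>g\<in>{g \<in> set t \<rightarrow>\<^sub>E B. restrict g (set ?s) = f}. G (map g t))"
    using assms(1) by (simp add: sum.inter_filter finite_PiE)
  finally show ?thesis .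
qed

lemma tuple_weight_proj_marginal:
  assumes "finite B" and i: "set i \<subseteq> {..<length t}"
    and marginal: "\<And>f. f \<in> set (proj i t) \<rightarrow>\<^sub>E B \<Longrightarrow>
       Fs f = (\<Sum>g\<in>{g \<in> set t \<rightarrow>\<^sub>E B. restrict g (set (proj i t)) = f}. Ft g)"
  shows "tuple_weight B (proj i t) Fs h' = (\<Sum>h\<in>{h \<in> tuples B (length t). proj i h = h'}. tuple_weight B t Ft h)"
proof (cases "h' \<in> tuples B (length i) \<and> consistent (proj i t) h'")
  case True
  let ?f = "tuple_assignment (proj i t) h'"
  have f: "?f \<in> set (proj i t) \<rightarrow>\<^sub>E B" using True by (intro tuple_assignment_PiE) simp
  have h': "map ?f (proj i t) = h'" using True map_tuple_assignment by blast
  have "(\<Sum>h\<in>{h \<in> tuples B (length t). proj i h = h'}. tuple_weight B t Ft h)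
      = (\<Sum>g\<in>{g \<in> set t \<rightarrow>\<^sub>E B. restrict g (set (proj i t)) = ?f}. tuple_weight B t Ft (map g t))"
    using sum_proj_eq_sum_restrict[OF assms(1) _ i f, of "tuple_weight B t Ft"]
    by (simp add: h' tuple_weight_inconsistent)
  also have "\<dots> = Fs ?f"
    using marginal[OF f] by (auto simp: tuple_weight_map intro: sum.cong)
  finally show ?thesis using True by (simp add: tuple_weight_def)
next
  case False
  have "tuple_weight B t Ft h = 0" if "h \<in> tuples B (length t)" "proj i h = h'" for h
    using False that consistent_proj[OF _ i] proj_in_tuples[OF _ i] by (auto simp: tuple_weight_def)
  then show ?thesis using False by (auto simp: tuple_weight_def intro: sum.neutral)
qed

section \<open>Sherali--Adams solutions\<close>

locale SA_solution =
  fixes sig :: "'r set" and k :: nat and X :: "('x, 'r) struc" and A :: "('a, 'r) struc"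
    and p :: "'x set \<Rightarrow> ('x \<Rightarrow> 'a) \<Rightarrow> rat" and q :: "'r \<times> 'x list \<Rightarrow> ('x \<Rightarrow> 'a) \<Rightarrow> rat"
  assumes p_bounds: "\<lbrakk>V \<subseteq> univ X; 1 \<le> card V; card V \<le> k; f \<in> V \<rightarrow>\<^sub>E univ A\<rbrakk> \<Longrightarrow> 0 \<le> p V f \<and> p V f \<le> 1"
    and q_bounds: "\<lbrakk>c \<in> constraints sig X; f \<in> set (snd c) \<rightarrow>\<^sub>E univ A\<rbrakk> \<Longrightarrow> 0 \<le> q c f \<and> q c f \<le> 1"
    and p_sum: "\<lbrakk>V \<subseteq> univ X; 1 \<le> card V; card V \<le> k\<rbrakk> \<Longrightarrow> (\<Sum>f \<in> V \<rightarrow>\<^sub>E univ A. p V f) = 1"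
    and p_marginal: "\<lbrakk>U \<noteq> {}; U \<subseteq> V; V \<subseteq> univ X; card V \<le> k; f \<in> U \<rightarrow>\<^sub>E univ A\<rbrakk> \<Longrightarrow>
       p U f = (\<Sum>g \<in> {g \<in> V \<rightarrow>\<^sub>E univ A. restrict g U = f}. p V g)"
    and q_marginal: "\<lbrakk>c \<in> constraints sig X; U \<noteq> {}; U \<subseteq> set (snd c); card U \<le> k; f \<in> U \<rightarrow>\<^sub>E univ A\<rbrakk> \<Longrightarrow>
       p U f = (\<Sum>g \<in> {g \<in> set (snd c) \<rightarrow>\<^sub>E univ A. restrict g U = f}. q c g)"
    and q_support: "\<lbrakk>c \<in> constraints sig X; f \<in> set (snd c) \<rightarrow>\<^sub>E univ A; map f (snd c) \<notin> rels A (fst c)\<rbrakk> \<Longrightarrow>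
       q c f = 0"

lemma SA_feasible_iff_SA_solution: "SA_feasible sig k X A \<longleftrightarrow> (\<exists>p q. SA_solution sig k X A p q)"
  unfolding SA_feasible_def SA_solution_def by (intro ex_cong1) (simp only: Ball_def imp_conjL conj_assoc all_simps)

lemma (in SA_solution) tuple_weight_constraint_support:
  assumes c: "c \<in> constraints sig X"
  shows "h \<notin> rels A (fst c) \<Longrightarrow> tuple_weight (univ A) (snd c) (q c) h = 0"
    and "S \<subseteq> {..<length (snd c)} \<Longrightarrow> eq_on S (snd c) \<Longrightarrow> \<not> eq_on S h \<Longrightarrow> tuple_weight (univ A) (snd c) (q c) h = 0"
proof -
  show "tuple_weight (univ A) (snd c) (q c) h = 0" if "h \<notin> rels A (fst c)"
    using q_support[OF c] that by (rule tuple_weight_eq_0_if_not_in)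
  show "tuple_weight (univ A) (snd c) (q c) h = 0" if "S \<subseteq> {..<length (snd c)}" "eq_on S (snd c)" "\<not> eq_on S h"
    using that(2,1,3) by (rule tuple_weight_eq_0_if_not_eq_on)
qed

lemma wf_struc_constraintD:
  assumes "wf_struc sig ar X" and "c \<in> constraints sig X"
  shows "fst c \<in> sig" "snd c \<in> rels X (fst c)" "length (snd c) = ar (fst c)" "set (snd c) \<subseteq> univ X"
  using assms by (force simp: wf_struc_def constraints_def)+

lemma wf_struc_constraint_nonempty:
  assumes "wf_sig sig ar" "wf_struc sig ar X" "c \<in> constraints sig X"
  shows "snd c \<noteq> []"
  using assms wf_struc_constraintD[OF assms(2,3)] by (fastforce simp: wf_sig_def)

lemma finite_constraints:
  assumes "wf_sig sig ar" "wf_struc sig ar X"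
  shows "finite (constraints sig X)"
proof (rule finite_subset)
  show "constraints sig X \<subseteq> (SIGMA R:sig. tuples (univ X) (ar R))"
    using assms(2) by (auto simp: constraints_def wf_struc_def tuples_def)
  show "finite (SIGMA R:sig. tuples (univ X) (ar R))"
    using assms by (auto simp: wf_sig_def wf_struc_def finite_tuples)
qed

lemma wf_factor_graph_if_wf_struc:
  assumes "wf_sig sig ar" "wf_struc sig ar X"
  shows "wf_factor_graph sig X"
  using assms finite_constraints wf_struc_constraint_nonempty wf_struc_constraintD(4)
  by (fastforce simp: wf_factor_graph_def wf_struc_def)

lemma snd_edge_label [simp]: "snd (edge_label a c) = fst c"
  by (simp add: edge_label_def)

lemma eq_on_edge_label: "eq_on (fst (edge_label a c)) (snd c)"
  by (simp add: eq_on_def edge_label_def)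

lemma edge_label_subset: "fst (edge_label a c) \<subseteq> {..<length (snd c)}"
  by (auto simp: edge_label_def)

lemma proj_edge_label: "i \<in> fst (edge_label a c) \<Longrightarrow> proj [i] (snd c) = [a]"
  by (simp add: edge_label_def proj_def)

lemma edge_label_nonempty: "a \<in> set (snd c) \<Longrightarrow> fst (edge_label a c) \<noteq> {}"
  by (auto simp: edge_label_def in_set_conv_nth)

lemma inconsistent_imp_not_eq_on_edge_label:
  assumes "length h = length (snd c)" and "\<not> consistent (snd c) h"
  obtains a where "a \<in> set (snd c)" "\<not> eq_on (fst (edge_label a c)) h"
proof -
  obtain i j where ij: "i < length (snd c)" "j < length (snd c)" "snd c ! i = snd c ! j" "h ! i \<noteq> h ! j"
    using assms by (auto simp: consistent_def)
  then have "\<not> eq_on (fst (edge_label (snd c ! i) c)) h"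
    by (auto simp: eq_on_def edge_label_def)
  moreover have "snd c ! i \<in> set (snd c)" using ij(1) by simp
  ultimately show ?thesis using that by blast
qed

section \<open>The case \<open>k = 1\<close>\<close>

text \<open>An element \<open>x\<close> carries \<open>p {x}\<close> and a constraint \<open>c\<close> carries \<open>q c\<close>, both read as weights of
  tuples over \<open>A\<close>.\<close>

definition sa1_vertex_cond :: "'a set \<Rightarrow> bool \<Rightarrow> ('a list \<Rightarrow> rat) \<Rightarrow> bool" where
  "sa1_vertex_cond B is_elem F \<longleftrightarrow> (\<forall>h. 0 \<le> F h \<and> F h \<le> 1) \<and>
     (is_elem \<longrightarrow> (\<forall>h. h \<notin> tuples B 1 \<longrightarrow> F h = 0) \<and> (\<Sum>h\<in>tuples B 1. F h) = 1)"

definition sa1_edge_cond ::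
  "('a, 'r) struc \<Rightarrow> ('r \<Rightarrow> nat) \<Rightarrow> nat set \<times> 'r \<Rightarrow> ('a list \<Rightarrow> rat) \<Rightarrow> ('a list \<Rightarrow> rat) \<Rightarrow> bool" where
  "sa1_edge_cond A ar l F G \<longleftrightarrow> (\<forall>h. h \<notin> rels A (snd l) \<longrightarrow> G h = 0) \<and> (\<forall>h. \<not> eq_on (fst l) h \<longrightarrow> G h = 0) \<and>
     (\<forall>i\<in>fst l. \<forall>h'. F h' = (\<Sum>h\<in>{h \<in> tuples (univ A) (ar (snd l)). proj [i] h = h'}. G h))"

lemma sa1_vertex_cond_avg:
  assumes "finite B" "finite S" "S \<noteq> {}" "\<forall>i\<in>S. sa1_vertex_cond B is_elem (F i)"
  shows "sa1_vertex_cond B is_elem (avg F S)"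
proof -
  have "0 \<le> avg F S h \<and> avg F S h \<le> 1" for h
    using assms by (intro avg_bounds) (auto simp: sa1_vertex_cond_def)
  moreover have "avg F S h = 0" if "is_elem" "h \<notin> tuples B 1" for h
    using assms that by (intro avg_eq_0) (auto simp: sa1_vertex_cond_def)
  moreover have "(\<Sum>h\<in>tuples B 1. avg F S h) = 1" if "is_elem"
    using assms that by (intro sum_avg_const) (auto simp: sa1_vertex_cond_def finite_tuples)
  ultimately show ?thesis by (simp add: sa1_vertex_cond_def)
qed

lemma sa1_edge_cond_avg:
  assumes "finite (univ A)" "\<forall>i\<in>S. sa1_edge_cond A ar l (F i) (G i)"
  shows "sa1_edge_cond A ar l (avg F S) (avg G S)"
  using assms by (auto simp: sa1_edge_cond_def finite_tuples intro!: avg_eq_0 avg_sum_commute)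

definition sa1_assignment :: "'a set \<Rightarrow> ('x set \<Rightarrow> ('x \<Rightarrow> 'a) \<Rightarrow> rat) \<Rightarrow> ('r \<times> 'x list \<Rightarrow> ('x \<Rightarrow> 'a) \<Rightarrow> rat) \<Rightarrow>
    'x + 'r \<times> 'x list \<Rightarrow> 'a list \<Rightarrow> rat" where
  "sa1_assignment B p q v = (case v of Inl x \<Rightarrow> tuple_weight B [x] (p {x}) | Inr c \<Rightarrow> tuple_weight B (snd c) (q c))"

context SA_solution
begin

lemma sa1_vertex_cond_sa1_assignment:
  assumes "1 \<le> k" and "finite (univ A)" and "v \<in> fg_vertices sig X"
  shows "sa1_vertex_cond (univ A) (isl v) (sa1_assignment (univ A) p q v)"
proof (cases v)
  case (Inl x)
  then have x: "{x} \<subseteq> univ X" using assms(3) by (auto simp: fg_vertices_def)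
  have "(\<Sum>h\<in>tuples (univ A) (length [x]). tuple_weight (univ A) [x] (p {x}) h) = 1"
    using p_sum[OF x] assms(1) sum_tuple_weight[OF assms(2), of "[x]" "p {x}"] by simp
  moreover have "0 \<le> tuple_weight (univ A) [x] (p {x}) h \<and> tuple_weight (univ A) [x] (p {x}) h \<le> 1" for h
    using p_bounds[OF x] assms(1) by (intro tuple_weight_bounds) simp
  ultimately show ?thesis using Inl by (simp add: sa1_vertex_cond_def sa1_assignment_def tuple_weight_def)
next
  case (Inr c)
  then have "c \<in> constraints sig X" using assms(3) by (auto simp: fg_vertices_def)
  then show ?thesis
    using Inr q_bounds by (simp add: sa1_vertex_cond_def sa1_assignment_def tuple_weight_bounds)
qed

lemma sa1_edge_cond_sa1_assignment:
  assumes "1 \<le> k" and "finite (univ A)" and wf: "wf_struc sig ar X"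
    and c: "c \<in> constraints sig X" and x: "x \<in> set (snd c)"
  shows "sa1_edge_cond A ar (edge_label x c) (sa1_assignment (univ A) p q (Inl x)) (sa1_assignment (univ A) p q (Inr c))"
proof -
  let ?G = "tuple_weight (univ A) (snd c) (q c)"
  have "?G h = 0" if "h \<notin> rels A (fst c)" for h
    using tuple_weight_constraint_support(1)[OF c that] .
  moreover have "?G h = 0" if "\<not> eq_on (fst (edge_label x c)) h" for h
    using tuple_weight_constraint_support(2)[OF c edge_label_subset eq_on_edge_label that] .
  moreover have "tuple_weight (univ A) [x] (p {x}) h' = (\<Sum>h\<in>{h \<in> tuples (univ A) (ar (fst c)). proj [i] h = h'}. ?G h)"
    if i: "i \<in> fst (edge_label x c)" for i h'
  proof -
    have i_lt: "set [i] \<subseteq> {..<length (snd c)}" using i edge_label_subset[of x c] by auto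
    have "p {x} f = (\<Sum>g\<in>{g \<in> set (snd c) \<rightarrow>\<^sub>E univ A. restrict g (set (proj [i] (snd c))) = f}. q c g)"
      if "f \<in> set (proj [i] (snd c)) \<rightarrow>\<^sub>E univ A" for f
      using q_marginal[OF c, of "{x}" f] that x assms(1) by (simp add: proj_edge_label[OF i])
    then have "tuple_weight (univ A) (proj [i] (snd c)) (p {x}) h' =
        (\<Sum>h\<in>{h \<in> tuples (univ A) (length (snd c)). proj [i] h = h'}. ?G h)"
      by (rule tuple_weight_proj_marginal[OF assms(2) i_lt])
    then show ?thesis using proj_edge_label[OF i] wf_struc_constraintD(3)[OF wf c] by simp
  qed
  ultimately show ?thesis unfolding sa1_edge_cond_def sa1_assignment_def sum.case snd_edge_label by blast
qed

lemma fg_solution_sa1_assignment: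
  assumes "1 \<le> k" and "finite (univ A)" and "wf_struc sig ar X"
  shows "fg_solution sig X (sa1_vertex_cond (univ A)) (sa1_edge_cond A ar) (sa1_assignment (univ A) p q)"
  using assms sa1_vertex_cond_sa1_assignment sa1_edge_cond_sa1_assignment by (simp add: fg_solution_def)

end

lemma sa1_edge_cond_marginal:
  assumes cond: "sa1_edge_cond A ar (edge_label x c) F G" and x: "x \<in> set (snd c)"
    and len: "length (snd c) = ar (fst c)" and finB: "finite (univ A)"
    and G0: "\<And>h. h \<in> tuples (univ A) (length (snd c)) \<Longrightarrow> \<not> consistent (snd c) h \<Longrightarrow> G h = 0"
    and f: "f \<in> {x} \<rightarrow>\<^sub>E univ A"
  shows "F [f x] = (\<Sum>g \<in> {g \<in> set (snd c) \<rightarrow>\<^sub>E univ A. restrict g {x} = f}. G (map g (snd c)))"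
proof -
  obtain i where i: "i \<in> fst (edge_label x c)" using edge_label_nonempty[OF x] by blast
  have i_lt: "set [i] \<subseteq> {..<length (snd c)}" using i edge_label_subset[of x c] by auto
  have "F [f x] = (\<Sum>h\<in>{h \<in> tuples (univ A) (length (snd c)). proj [i] h = map f (proj [i] (snd c))}. G h)"
    using cond i len by (simp add: sa1_edge_cond_def proj_edge_label)
  also have "\<dots> = (\<Sum>g \<in> {g \<in> set (snd c) \<rightarrow>\<^sub>E univ A. restrict g (set (proj [i] (snd c))) = f}. G (map g (snd c)))"
    using f by (intro sum_proj_eq_sum_restrict[OF finB G0 i_lt]) (simp_all add: proj_edge_label[OF i])
  finally show ?thesis by (simp add: proj_edge_label[OF i])
qed

lemma singleton_if_card_le_1:
  assumes "finite V" "V \<noteq> {}" "card V \<le> 1"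
  obtains x where "V = {x}"
proof -
  have "card V = 1" using assms by (simp add: le_antisym Suc_le_eq card_gt_0_iff)
  then show ?thesis using that by (auto simp: card_1_singleton_iff)
qed

context
  fixes sig :: "'r set" and ar :: "'r \<Rightarrow> nat" and X :: "('x, 'r) struc" and A :: "('a, 'r) struc"
    and P :: "'x + 'r \<times> 'x list \<Rightarrow> 'a list \<Rightarrow> rat"
  assumes wf: "wf_struc sig ar X"
    and sol: "fg_solution sig X (sa1_vertex_cond (univ A)) (sa1_edge_cond A ar) P"
begin

lemma sa1_elem_cond: "x \<in> univ X \<Longrightarrow> sa1_vertex_cond (univ A) True (P (Inl x))"
  using sol by (force simp: fg_solution_def fg_vertices_def)

lemma sa1_cons_cond: "c \<in> constraints sig X \<Longrightarrow> sa1_vertex_cond (univ A) False (P (Inr c))"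
  using sol by (force simp: fg_solution_def fg_vertices_def)

lemma sa1_edge_cond_at:
  "c \<in> constraints sig X \<Longrightarrow> x \<in> set (snd c) \<Longrightarrow> sa1_edge_cond A ar (edge_label x c) (P (Inl x)) (P (Inr c))"
  using sol by (simp add: fg_solution_def)

lemma sa1_cons_inconsistent:
  assumes c: "c \<in> constraints sig X" and h: "h \<in> tuples (univ A) (length (snd c))" "\<not> consistent (snd c) h"
  shows "P (Inr c) h = 0"
proof -
  obtain x where "x \<in> set (snd c)" "\<not> eq_on (fst (edge_label x c)) h"
    using h by (auto simp: tuples_def elim: inconsistent_imp_not_eq_on_edge_label)
  then show ?thesis using sa1_edge_cond_at[OF c] by (simp add: sa1_edge_cond_def)
qed

lemma singleton_if_subset_univ:
  assumes "V \<subseteq> univ X" "V \<noteq> {}" "card V \<le> 1"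
  shows "\<exists>x. V = {x} \<and> x \<in> univ X"
  using assms finite_subset[OF assms(1)] wf by (auto simp: wf_struc_def elim: singleton_if_card_le_1)

lemma SA_solution_1_if_fg_solution_sa1:
  assumes sig: "wf_sig sig ar" and finB: "finite (univ A)"
  shows "SA_solution sig 1 X A (\<lambda>V f. P (Inl (the_elem V)) [f (the_elem V)]) (\<lambda>c f. P (Inr c) (map f (snd c)))"
proof
  fix V f assume "V \<subseteq> univ X" "1 \<le> card V" "card V \<le> 1"
  then obtain x where "V = {x}" "x \<in> univ X" using singleton_if_subset_univ[of V] by fastforce
  then show "0 \<le> P (Inl (the_elem V)) [f (the_elem V)] \<and> P (Inl (the_elem V)) [f (the_elem V)] \<le> 1"
    using sa1_elem_cond by (simp add: sa1_vertex_cond_def)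
next
  fix V assume "V \<subseteq> univ X" "1 \<le> card V" "card V \<le> 1"
  then obtain x where V: "V = {x}" "x \<in> univ X" using singleton_if_subset_univ[of V] by fastforce
  have "(\<Sum>f \<in> set [x] \<rightarrow>\<^sub>E univ A. P (Inl x) (map f [x])) = (\<Sum>h\<in>tuples (univ A) (length [x]). P (Inl x) h)"
    by (rule sum_tuples_eq_sum_PiE[OF finB, symmetric]) (auto simp: tuples_def consistent_def)
  then show "(\<Sum>f \<in> V \<rightarrow>\<^sub>E univ A. P (Inl (the_elem V)) [f (the_elem V)]) = 1"
    using sa1_elem_cond[OF V(2)] V(1) by (simp add: sa1_vertex_cond_def)
next
  fix U V f assume U: "U \<noteq> {}" "U \<subseteq> V" and V: "V \<subseteq> univ X" "card V \<le> 1" and f: "f \<in> U \<rightarrow>\<^sub>E univ A"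
  obtain x where "V = {x}" using singleton_if_subset_univ[of V] U V by blast
  moreover from this have "U = {x}" using U by blast
  moreover from calculation have "{g \<in> V \<rightarrow>\<^sub>E univ A. restrict g U = f} = {f}"
    using f by (auto simp: PiE_restrict)
  ultimately show "P (Inl (the_elem U)) [f (the_elem U)]
      = (\<Sum>g \<in> {g \<in> V \<rightarrow>\<^sub>E univ A. restrict g U = f}. P (Inl (the_elem V)) [g (the_elem V)])"
    by simp
next
  fix c U f assume c: "c \<in> constraints sig X" and U: "U \<noteq> {}" "U \<subseteq> set (snd c)" "card U \<le> 1"
    and f: "f \<in> U \<rightarrow>\<^sub>E univ A"
  then obtain x where x: "U = {x}" "x \<in> set (snd c)"
    using singleton_if_subset_univ wf_struc_constraintD(4)[OF wf c] by (metis order_trans insert_subset)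
  show "P (Inl (the_elem U)) [f (the_elem U)]
      = (\<Sum>g \<in> {g \<in> set (snd c) \<rightarrow>\<^sub>E univ A. restrict g U = f}. P (Inr c) (map g (snd c)))"
    using sa1_edge_cond_marginal[OF sa1_edge_cond_at[OF c x(2)] x(2) wf_struc_constraintD(3)[OF wf c] finB
        sa1_cons_inconsistent[OF c]] f x(1) by simp
next
  fix c f assume c: "c \<in> constraints sig X" and "map f (snd c) \<notin> rels A (fst c)"
  moreover obtain x where "x \<in> set (snd c)"
    using wf_struc_constraint_nonempty[OF sig wf c] by (cases "snd c") auto
  ultimately show "P (Inr c) (map f (snd c)) = 0"
    using sa1_edge_cond_at by (simp add: sa1_edge_cond_def)
qed (use sa1_cons_cond in \<open>simp add: sa1_vertex_cond_def\<close>)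

end

section \<open>The structure \<open>X\<^sup>*\<^sup>k\<close>\<close>

lemma ksig_simps:
  "TS j S \<in> ksig sig ar k \<longleftrightarrow> 1 \<le> j \<and> j \<le> k \<and> S \<subseteq> {..<j}"
  "RS R S \<in> ksig sig ar k \<longleftrightarrow> R \<in> sig \<and> S \<subseteq> {..<ar R}"
  "Ti j i \<in> ksig sig ar k \<longleftrightarrow> 1 \<le> j \<and> j \<le> k \<and> 1 \<le> length i \<and> length i \<le> k \<and> set i \<subseteq> {..<j}"
  "Ri R i \<in> ksig sig ar k \<longleftrightarrow> R \<in> sig \<and> 1 \<le> length i \<and> length i \<le> k \<and> set i \<subseteq> {..<ar R}"
  by (auto simp: ksig_def)

lemma constraints_kpow_iff:
  "(S, l) \<in> constraints (ksig sig ar k) (kpow sig k X) \<longleftrightarrow> S \<in> ksig sig ar k \<and> l \<in> kpow_rels X S"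
  by (simp add: constraints_def kpow_def)

lemma Inl_in_univ_kpow: "a \<in> tuples (univ X) j \<Longrightarrow> 1 \<le> j \<Longrightarrow> j \<le> k \<Longrightarrow> Inl a \<in> univ (kpow sig k X)"
  unfolding kpow_def struc.simps by (intro UnI1 imageI UN_I[of j]) auto

lemma Inr_in_univ_kpow: "c \<in> constraints sig X \<Longrightarrow> Inr c \<in> univ (kpow sig k X)"
  by (simp add: kpow_def)

lemma finite_ksig:
  assumes "finite sig"
  shows "finite (ksig sig ar k)"
proof (rule finite_subset)
  let ?L = "\<lambda>n. {i :: nat list. set i \<subseteq> {..<n} \<and> length i \<le> k}"
  show "ksig sig ar k \<subseteq> case_prod TS ` ({..k} \<times> Pow {..<k}) \<union> (\<Union>R\<in>sig. RS R ` Pow {..<ar R})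
      \<union> case_prod Ti ` ({..k} \<times> ?L k) \<union> (\<Union>R\<in>sig. Ri R ` ?L (ar R))"
  proof
    fix s assume "s \<in> ksig sig ar k"
    then show "s \<in> case_prod TS ` ({..k} \<times> Pow {..<k}) \<union> (\<Union>R\<in>sig. RS R ` Pow {..<ar R})
      \<union> case_prod Ti ` ({..k} \<times> ?L k) \<union> (\<Union>R\<in>sig. Ri R ` ?L (ar R))"
      by (cases s) (auto simp: ksig_simps image_iff intro!: bexI[where x = "(x, y)" for x y])
  qed
  show "finite (case_prod TS ` ({..k} \<times> Pow {..<k}) \<union> (\<Union>R\<in>sig. RS R ` Pow {..<ar R})
      \<union> case_prod Ti ` ({..k} \<times> ?L k) \<union> (\<Union>R\<in>sig. Ri R ` ?L (ar R)))"
    using assms finite_lists_length_le[OF finite_lessThan, of _ k] by simp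
qed

lemma kpow_rels_subset_univ:
  assumes wf: "wf_struc sig ar X" and S: "S \<in> ksig sig ar k" and l: "l \<in> kpow_rels X S"
  shows "l \<noteq> [] \<and> length l \<le> 2 \<and> set l \<subseteq> univ (kpow sig k X)"
proof (cases S)
  case (TS j S')
  then show ?thesis using S l Inl_in_univ_kpow[of _ X j k sig] by (auto simp: ksig_simps)
next
  case (RS R S')
  then show ?thesis using S l Inr_in_univ_kpow[of "(R, a)" sig X k for a] by (auto simp: ksig_simps constraints_def)
next
  case (Ti j i)
  then obtain a where a: "l = [Inl a, Inl (proj i a)]" "a \<in> tuples (univ X) j" using l by auto
  have "proj i a \<in> tuples (univ X) (length i)" using a(2) S Ti by (intro proj_in_tuples) (auto simp: ksig_simps)
  then show ?thesis using a S Ti by (auto simp: ksig_simps intro: Inl_in_univ_kpow)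
next
  case (Ri R i)
  then obtain a where a: "l = [Inr (R, a), Inl (proj i a)]" "a \<in> rels X R" using l by auto
  have R: "R \<in> sig" "1 \<le> length i" "length i \<le> k" "set i \<subseteq> {..<ar R}" using S Ri by (simp_all add: ksig_simps)
  have "a \<in> tuples (univ X) (ar R)" using wf R(1) a(2) by (auto simp: wf_struc_def tuples_def)
  then have "Inl (proj i a) \<in> univ (kpow sig k X)"
    using Inl_in_univ_kpow[OF proj_in_tuples R(2,3)] R(4) by blast
  moreover have "Inr (R, a) \<in> univ (kpow sig k X)" using R(1) a(2) by (intro Inr_in_univ_kpow) (simp add: constraints_def)
  ultimately show ?thesis using a(1) by simp
qed

lemma wf_factor_graph_kpow:
  assumes sig: "wf_sig sig ar" and wf: "wf_struc sig ar X"
  shows "wf_factor_graph (ksig sig ar k) (kpow sig k X)"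
proof -
  have fin_univ: "finite (univ (kpow sig k X))"
    using wf finite_constraints[OF sig wf] by (simp add: kpow_def wf_struc_def finite_tuples)
  have "constraints (ksig sig ar k) (kpow sig k X)
      \<subseteq> ksig sig ar k \<times> {l. set l \<subseteq> univ (kpow sig k X) \<and> length l \<le> 2}"
  proof (rule subrelI)
    fix S l assume "(S, l) \<in> constraints (ksig sig ar k) (kpow sig k X)"
    then show "(S, l) \<in> ksig sig ar k \<times> {l. set l \<subseteq> univ (kpow sig k X) \<and> length l \<le> 2}"
      using kpow_rels_subset_univ[OF wf, of S k l] by (simp add: constraints_kpow_iff)
  qed
  moreover have "finite (ksig sig ar k \<times> {l. set l \<subseteq> univ (kpow sig k X) \<and> length l \<le> 2})"
    using sig fin_univ by (simp add: wf_sig_def finite_ksig finite_lists_length_le)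
  ultimately have "finite (constraints (ksig sig ar k) (kpow sig k X))" by (rule finite_subset)
  moreover have "snd c \<noteq> [] \<and> set (snd c) \<subseteq> univ (kpow sig k X)"
    if "c \<in> constraints (ksig sig ar k) (kpow sig k X)" for c
    using that kpow_rels_subset_univ[OF wf, of "fst c" k "snd c"] constraints_kpow_iff[of "fst c" "snd c"] by simp
  ultimately show ?thesis using fin_univ by (simp add: wf_factor_graph_def)
qed

text \<open>A tuple \<open>t\<close> of \<open>X\<^sup>*\<^sup>k\<close> carries \<open>p (set t)\<close> and a constraint \<open>c\<close> of \<open>X\<close> carries \<open>q c\<close>, as
  weights of tuples over \<open>A\<close>; a constraint of \<open>X\<^sup>*\<^sup>k\<close> carries the weight of its first entry. The
  binary relations \<open>T\<^sub>j\<^sub>,\<^sub>i\<close> and \<open>R\<^sub>i\<close> then express the marginal constraints of \<open>SA\<^sup>k\<close>.\<close>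

definition marginal_cond :: "'a set \<Rightarrow> nat \<Rightarrow> nat list \<Rightarrow> nat set \<Rightarrow> ('a list \<Rightarrow> rat) \<Rightarrow> ('a list \<Rightarrow> rat) \<Rightarrow> bool" where
  "marginal_cond B n i I F G \<longleftrightarrow> (0 \<in> I \<longrightarrow> G = F) \<and>
     (1 \<in> I \<longrightarrow> (\<forall>h'. F h' = (\<Sum>h\<in>{h \<in> tuples B n. proj i h = h'}. G h)))"

definition sak_edge_cond ::
  "('a, 'r) struc \<Rightarrow> ('r \<Rightarrow> nat) \<Rightarrow> nat set \<times> 'r ksym \<Rightarrow> ('a list \<Rightarrow> rat) \<Rightarrow> ('a list \<Rightarrow> rat) \<Rightarrow> bool" where
  "sak_edge_cond A ar l F G = (case snd l of
     TS j S \<Rightarrow> (\<forall>h. 0 \<le> F h \<and> F h \<le> 1) \<and> (\<Sum>h\<in>tuples (univ A) j. F h) = 1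
   | RS R S \<Rightarrow> (\<forall>h. 0 \<le> F h \<and> F h \<le> 1) \<and> (\<forall>h. h \<notin> rels A R \<longrightarrow> F h = 0) \<and> (\<forall>h. \<not> eq_on S h \<longrightarrow> F h = 0)
   | Ti j i \<Rightarrow> marginal_cond (univ A) j i (fst l) F G
   | Ri R i \<Rightarrow> marginal_cond (univ A) (ar R) i (fst l) F G)"

lemma marginal_cond_avg:
  assumes "finite B" "\<forall>x\<in>S. marginal_cond B n i I (F x) (G x)"
  shows "marginal_cond B n i I (avg F S) (avg G S)"
proof -
  have "0 \<in> I \<Longrightarrow> avg G S = avg F S"
    using assms(2) unfolding marginal_cond_def avg_def by (intro ext) (simp cong: sum.cong)
  moreover have "avg F S h' = (\<Sum>h\<in>{h \<in> tuples B n. proj i h = h'}. avg G S h)" if "1 \<in> I" for h'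
    using assms that by (intro avg_sum_commute) (simp_all add: marginal_cond_def finite_tuples)
  ultimately show ?thesis by (simp add: marginal_cond_def)
qed

lemma sak_edge_cond_avg:
  assumes finB: "finite (univ A)" and S: "finite S" "S \<noteq> {}" and cond: "\<forall>x\<in>S. sak_edge_cond A ar l (F x) (G x)"
  shows "sak_edge_cond A ar l (avg F S) (avg G S)"
proof (cases "snd l")
  case (TS j S')
  have "0 \<le> avg F S h \<and> avg F S h \<le> 1" for h
    using cond TS by (intro avg_bounds[OF S]) (simp add: sak_edge_cond_def)
  moreover have "(\<Sum>h\<in>tuples (univ A) j. avg F S h) = 1"
    using cond TS by (intro sum_avg_const[OF S]) (simp_all add: sak_edge_cond_def finite_tuples[OF finB])
  ultimately show ?thesis using TS by (simp add: sak_edge_cond_def)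
next
  case (RS R S')
  have "0 \<le> avg F S h \<and> avg F S h \<le> 1" for h
    using cond RS by (intro avg_bounds[OF S]) (simp add: sak_edge_cond_def)
  moreover have "avg F S h = 0" if "h \<notin> rels A R \<or> \<not> eq_on S' h" for h
    using cond RS that by (intro avg_eq_0) (auto simp: sak_edge_cond_def)
  ultimately show ?thesis using RS by (simp add: sak_edge_cond_def)
next
  case (Ti j i)
  then show ?thesis using cond marginal_cond_avg[OF finB] by (simp add: sak_edge_cond_def)
next
  case (Ri R i)
  then show ?thesis using cond marginal_cond_avg[OF finB] by (simp add: sak_edge_cond_def)
qed

definition sak_vertex_weight :: "'a set \<Rightarrow> ('x set \<Rightarrow> ('x \<Rightarrow> 'a) \<Rightarrow> rat) \<Rightarrow> ('r \<times> 'x list \<Rightarrow> ('x \<Rightarrow> 'a) \<Rightarrow> rat) \<Rightarrow>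
    'x list + 'r \<times> 'x list \<Rightarrow> 'a list \<Rightarrow> rat" where
  "sak_vertex_weight B p q w = (case w of Inl t \<Rightarrow> tuple_weight B t (p (set t)) | Inr c \<Rightarrow> tuple_weight B (snd c) (q c))"

definition sak_assignment :: "'a set \<Rightarrow> ('x set \<Rightarrow> ('x \<Rightarrow> 'a) \<Rightarrow> rat) \<Rightarrow> ('r \<times> 'x list \<Rightarrow> ('x \<Rightarrow> 'a) \<Rightarrow> rat) \<Rightarrow>
    ('x list + 'r \<times> 'x list) + 'r ksym \<times> ('x list + 'r \<times> 'x list) list \<Rightarrow> 'a list \<Rightarrow> rat" where
  "sak_assignment B p q v = (case v of Inl w \<Rightarrow> sak_vertex_weight B p q w | Inr e \<Rightarrow> sak_vertex_weight B p q (hd (snd e)))"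

lemma edge_label_first: "0 \<in> fst (edge_label w (S, x # xs)) \<Longrightarrow> w = x"
  by (simp add: edge_label_def)

lemma edge_label_second: "1 \<in> fst (edge_label w (S, [x, y])) \<Longrightarrow> w = y"
  by (simp add: edge_label_def)

lemma tuple_vertex_card:
  assumes "t \<in> tuples V j" "1 \<le> j" "j \<le> k"
  shows "set t \<subseteq> V" "1 \<le> card (set t)" "card (set t) \<le> k"
proof -
  have "length t = j" "set t \<subseteq> V" using assms(1) by (auto simp: tuples_def)
  moreover from this have "set t \<noteq> {}" using assms(2) by auto
  ultimately show "set t \<subseteq> V" "1 \<le> card (set t)" "card (set t) \<le> k"
    using card_length[of t] assms(3) by (auto simp: Suc_le_eq card_gt_0_iff)
qed

context SA_solution
begin

lemma tuple_weight_tuple_marginal: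
  assumes finB: "finite (univ A)" and t: "t \<in> tuples (univ X) j" "1 \<le> j" "j \<le> k"
    and i: "1 \<le> length i" "set i \<subseteq> {..<j}"
  shows "tuple_weight (univ A) (proj i t) (p (set (proj i t))) h'
       = (\<Sum>h\<in>{h \<in> tuples (univ A) j. proj i h = h'}. tuple_weight (univ A) t (p (set t)) h)"
proof -
  have len: "length t = j" using t(1) by (simp add: tuples_def)
  have "length (proj i t) \<ge> 1" using i(1) by simp
  then have "set (proj i t) \<noteq> {}" by (cases "proj i t") auto
  moreover have "set (proj i t) \<subseteq> set t" using i(2) len by (intro set_proj_subset) simp
  ultimately show ?thesis
    using p_marginal tuple_vertex_card[OF t] i(2) len
    by (intro tuple_weight_proj_marginal[OF finB, of i t, unfolded len]) auto
qed

lemma tuple_weight_constraint_marginal: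
  assumes finB: "finite (univ A)" and wf: "wf_struc sig ar X" and c: "c \<in> constraints sig X"
    and i: "1 \<le> length i" "length i \<le> k" "set i \<subseteq> {..<ar (fst c)}"
  shows "tuple_weight (univ A) (proj i (snd c)) (p (set (proj i (snd c)))) h'
       = (\<Sum>h\<in>{h \<in> tuples (univ A) (ar (fst c)). proj i h = h'}. tuple_weight (univ A) (snd c) (q c) h)"
proof -
  have len: "length (snd c) = ar (fst c)" using wf_struc_constraintD(3)[OF wf c] .
  have "length (proj i (snd c)) \<ge> 1" using i(1) by simp
  then have "set (proj i (snd c)) \<noteq> {}" by (cases "proj i (snd c)") auto
  moreover have "set (proj i (snd c)) \<subseteq> set (snd c)" using i(3) len by (intro set_proj_subset) simp
  moreover have "card (set (proj i (snd c))) \<le> k" using card_length[of "proj i (snd c)"] i(2) by simp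
  ultimately show ?thesis
    using q_marginal[OF c] i(3) len
    by (intro tuple_weight_proj_marginal[OF finB, of i "snd c", unfolded len]) auto
qed

lemma tuple_weight_tuple_distribution:
  assumes finB: "finite (univ A)" and t: "t \<in> tuples (univ X) j" "1 \<le> j" "j \<le> k"
  shows "(\<forall>h. 0 \<le> tuple_weight (univ A) t (p (set t)) h \<and> tuple_weight (univ A) t (p (set t)) h \<le> 1)
    \<and> (\<Sum>h\<in>tuples (univ A) j. tuple_weight (univ A) t (p (set t)) h) = 1"
  using p_bounds[OF tuple_vertex_card[OF t]] p_sum[OF tuple_vertex_card[OF t]] sum_tuple_weight[OF finB, of t "p (set t)"] t(1)
  by (simp add: tuples_def tuple_weight_bounds)

lemma sak_edge_cond_sak_assignment:
  assumes finB: "finite (univ A)" and wf: "wf_struc sig ar X"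
    and e: "e \<in> constraints (ksig sig ar k) (kpow sig k X)" and w: "w \<in> set (snd e)"
  shows "sak_edge_cond A ar (edge_label w e) (sak_assignment (univ A) p q (Inl w)) (sak_assignment (univ A) p q (Inr e))"
proof -
  obtain S l where el: "e = (S, l)" by (cases e)
  have S: "S \<in> ksig sig ar k" and l: "l \<in> kpow_rels X S" using e by (simp_all add: el constraints_kpow_iff)
  let ?W = "sak_vertex_weight (univ A) p q"
  show ?thesis
  proof (cases S)
    case (TS j S')
    then obtain t where "l = [Inl t]" "t \<in> tuples (univ X) j" using l by auto
    moreover have "1 \<le> j" "j \<le> k" using S TS by (simp_all add: ksig_simps)
    ultimately show ?thesis
      using w el TS tuple_weight_tuple_distribution[OF finB] by (simp add: sak_edge_cond_def sak_assignment_def sak_vertex_weight_def)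
  next
    case (RS R S')
    then obtain a where a: "l = [Inr (R, a)]" "a \<in> rels X R" "eq_on S' a" using l by auto
    have c: "(R, a) \<in> constraints sig X" using S RS a by (simp add: ksig_simps constraints_def)
    have "S' \<subseteq> {..<length a}" using S RS wf_struc_constraintD(3)[OF wf c] by (simp add: ksig_simps)
    then have "?W (Inr (R, a)) h = 0" if "h \<notin> rels A R \<or> \<not> eq_on S' h" for h
      using that tuple_weight_constraint_support[OF c] a(3) by (auto simp: sak_vertex_weight_def)
    moreover have "0 \<le> ?W (Inr (R, a)) h \<and> ?W (Inr (R, a)) h \<le> 1" for h
      using q_bounds[OF c] by (simp add: sak_vertex_weight_def tuple_weight_bounds)
    ultimately show ?thesis using w el RS a(1) by (auto simp: sak_edge_cond_def sak_assignment_def)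
  next
    case (Ti j i)
    then obtain t where t: "l = [Inl t, Inl (proj i t)]" "t \<in> tuples (univ X) j" using l by auto
    have ji: "1 \<le> j" "j \<le> k" "1 \<le> length i" "set i \<subseteq> {..<j}" using S Ti by (simp_all add: ksig_simps)
    have "w = Inl t" if "0 \<in> fst (edge_label w e)"
      using edge_label_first[of w S] that by (simp add: el t(1))
    moreover have "w = Inl (proj i t)" if "1 \<in> fst (edge_label w e)"
      using edge_label_second[of w S] that by (simp add: el t(1))
    ultimately have "marginal_cond (univ A) j i (fst (edge_label w e)) (?W w) (?W (Inl t))"
      using tuple_weight_tuple_marginal[OF finB t(2) ji] by (auto simp: marginal_cond_def sak_vertex_weight_def)
    then show ?thesis using el t(1) Ti by (simp add: sak_edge_cond_def sak_assignment_def)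
  next
    case (Ri R i)
    then obtain a where a: "l = [Inr (R, a), Inl (proj i a)]" "a \<in> rels X R" using l by auto
    have c: "(R, a) \<in> constraints sig X" using S Ri a by (simp add: ksig_simps constraints_def)
    have i: "1 \<le> length i" "length i \<le> k" "set i \<subseteq> {..<ar (fst (R, a))}" using S Ri by (simp_all add: ksig_simps)
    have "w = Inr (R, a)" if "0 \<in> fst (edge_label w e)"
      using edge_label_first[of w S] that by (simp add: el a(1))
    moreover have "w = Inl (proj i a)" if "1 \<in> fst (edge_label w e)"
      using edge_label_second[of w S] that by (simp add: el a(1))
    ultimately have "marginal_cond (univ A) (ar R) i (fst (edge_label w e)) (?W w) (?W (Inr (R, a)))"
      using tuple_weight_constraint_marginal[OF finB wf c i] by (auto simp: marginal_cond_def sak_vertex_weight_def)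
    then show ?thesis using el a(1) Ri by (simp add: sak_edge_cond_def sak_assignment_def)
  qed
qed

lemma fg_solution_sak_assignment:
  assumes "finite (univ A)" and "wf_struc sig ar X"
  shows "fg_solution (ksig sig ar k) (kpow sig k X) (\<lambda>_ _. True) (sak_edge_cond A ar) (sak_assignment (univ A) p q)"
  using sak_edge_cond_sak_assignment[OF assms] by (simp add: fg_solution_def)

end

definition distinct_list_of :: "'x set \<Rightarrow> 'x list" where
  "distinct_list_of V = (SOME t. distinct t \<and> set t = V)"

lemma distinct_list_of:
  assumes "finite V"
  shows "distinct (distinct_list_of V)" "set (distinct_list_of V) = V" "length (distinct_list_of V) = card V"
proof -
  have "\<exists>t. distinct t \<and> set t = V" using finite_distinct_list[OF assms] by blast
  then have "distinct (distinct_list_of V) \<and> set (distinct_list_of V) = V"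
    unfolding distinct_list_of_def by (rule someI_ex)
  then show "distinct (distinct_list_of V)" "set (distinct_list_of V) = V" "length (distinct_list_of V) = card V"
    using distinct_card by fastforce+
qed

lemma consistent_if_distinct: "distinct t \<Longrightarrow> length h = length t \<Longrightarrow> consistent t h"
  by (simp add: consistent_def nth_eq_iff_index_eq)

lemma proj_map_first_pos:
  assumes "set s \<subseteq> set t"
  shows "proj (map (first_pos t) s) t = s" "set (map (first_pos t) s) \<subseteq> {..<length t}"
proof -
  have y: "first_pos t y < length t" "t ! first_pos t y = y" if "y \<in> set s" for y
    using first_pos[of y t] that assms by auto
  show "proj (map (first_pos t) s) t = s" unfolding proj_def by (simp add: y(2) map_idI)
  show "set (map (first_pos t) s) \<subseteq> {..<length t}" using y(1) by auto
qed

context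
  fixes sig :: "'r set" and ar :: "'r \<Rightarrow> nat" and k :: nat and X :: "('x, 'r) struc" and A :: "('a, 'r) struc"
    and P :: "('x list + 'r \<times> 'x list) + 'r ksym \<times> ('x list + 'r \<times> 'x list) list \<Rightarrow> 'a list \<Rightarrow> rat"
  assumes wf: "wf_struc sig ar X"
    and sol: "fg_solution (ksig sig ar k) (kpow sig k X) (\<lambda>_ _. True) (sak_edge_cond A ar) P"
begin

lemma sak_edge_cond_at:
  assumes "S \<in> ksig sig ar k" "l \<in> kpow_rels X S" "w \<in> set l"
  shows "sak_edge_cond A ar (edge_label w (S, l)) (P (Inl w)) (P (Inr (S, l)))"
  using sol assms by (auto simp: fg_solution_def constraints_kpow_iff)

lemma tuple_vertex_distribution:
  assumes "t \<in> tuples (univ X) j" "1 \<le> j" "j \<le> k"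
  shows "(\<forall>h. 0 \<le> P (Inl (Inl t)) h \<and> P (Inl (Inl t)) h \<le> 1) \<and> (\<Sum>h\<in>tuples (univ A) j. P (Inl (Inl t)) h) = 1"
  using sak_edge_cond_at[of "TS j {}" "[Inl t]" "Inl t"] assms
  by (simp add: ksig_simps eq_on_def sak_edge_cond_def)

lemma constraint_vertex_weight:
  assumes "c \<in> constraints sig X" "S \<subseteq> {..<ar (fst c)}" "eq_on S (snd c)"
  shows "(\<forall>h. 0 \<le> P (Inl (Inr c)) h \<and> P (Inl (Inr c)) h \<le> 1) \<and>
    (\<forall>h. h \<notin> rels A (fst c) \<longrightarrow> P (Inl (Inr c)) h = 0) \<and> (\<forall>h. \<not> eq_on S h \<longrightarrow> P (Inl (Inr c)) h = 0)"
  using sak_edge_cond_at[of "RS (fst c) S" "[Inr c]" "Inr c"] assms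
  by (cases c) (simp add: ksig_simps constraints_def sak_edge_cond_def)

lemma tuple_vertex_marginal:
  assumes "t \<in> tuples (univ X) j" "1 \<le> j" "j \<le> k" "1 \<le> length i" "length i \<le> k" "set i \<subseteq> {..<j}"
  shows "P (Inl (Inl (proj i t))) h' = (\<Sum>h\<in>{h \<in> tuples (univ A) j. proj i h = h'}. P (Inl (Inl t)) h)"
proof -
  let ?S = "Ti j i" and ?l = "[Inl t, Inl (proj i t)]"
  have e: "?S \<in> ksig sig ar k" "?l \<in> kpow_rels X ?S" using assms by (simp_all add: ksig_simps)
  have "P (Inr (?S, ?l)) = P (Inl (Inl t))"
    using sak_edge_cond_at[OF e, of "Inl t"] by (simp add: sak_edge_cond_def marginal_cond_def edge_label_def)
  moreover have "P (Inl (Inl (proj i t))) h' = (\<Sum>h\<in>{h \<in> tuples (univ A) j. proj i h = h'}. P (Inr (?S, ?l)) h)"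
    using sak_edge_cond_at[OF e, of "Inl (proj i t)"] by (simp add: sak_edge_cond_def marginal_cond_def edge_label_def)
  ultimately show ?thesis by simp
qed

lemma constraint_vertex_marginal:
  assumes "c \<in> constraints sig X" "1 \<le> length i" "length i \<le> k" "set i \<subseteq> {..<ar (fst c)}"
  shows "P (Inl (Inl (proj i (snd c)))) h' = (\<Sum>h\<in>{h \<in> tuples (univ A) (ar (fst c)). proj i h = h'}. P (Inl (Inr c)) h)"
proof -
  let ?S = "Ri (fst c) i" and ?l = "[Inr c, Inl (proj i (snd c))]"
  have e: "?S \<in> ksig sig ar k" "?l \<in> kpow_rels X ?S"
    using assms by (cases c, simp add: ksig_simps constraints_def)+
  have "P (Inr (?S, ?l)) = P (Inl (Inr c))"
    using sak_edge_cond_at[OF e, of "Inr c"] by (simp add: sak_edge_cond_def marginal_cond_def edge_label_def)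
  moreover have "P (Inl (Inl (proj i (snd c)))) h'
      = (\<Sum>h\<in>{h \<in> tuples (univ A) (ar (fst c)). proj i h = h'}. P (Inr (?S, ?l)) h)"
    using sak_edge_cond_at[OF e, of "Inl (proj i (snd c))"] by (simp add: sak_edge_cond_def marginal_cond_def edge_label_def)
  ultimately show ?thesis by simp
qed

lemma distinct_list_of_tuples:
  assumes "V \<subseteq> univ X"
  shows "distinct_list_of V \<in> tuples (univ X) (card V)"
  using distinct_list_of[OF finite_subset[OF assms]] assms wf by (simp add: tuples_def wf_struc_def)

lemma constraint_vertex_inconsistent:
  assumes "c \<in> constraints sig X" and "h \<in> tuples (univ A) (length (snd c))" and "\<not> consistent (snd c) h"
  shows "P (Inl (Inr c)) h = 0"
proof -
  obtain n m where nm: "n < length (snd c)" "m < length (snd c)" "snd c ! n = snd c ! m" "h ! n \<noteq> h ! m"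
    using assms(2,3) by (auto simp: consistent_def tuples_def)
  have "{n, m} \<subseteq> {..<ar (fst c)}" using nm wf_struc_constraintD(3)[OF wf assms(1)] by simp
  moreover have "eq_on {n, m} (snd c)" "\<not> eq_on {n, m} h" using nm by (auto simp: eq_on_def)
  ultimately show ?thesis using constraint_vertex_weight[OF assms(1)] by blast
qed

lemma tuple_vertex_restrict_marginal:
  assumes finB: "finite (univ A)" and U: "U \<noteq> {}" "U \<subseteq> V" and V: "V \<subseteq> univ X" "card V \<le> k"
    and f: "f \<in> U \<rightarrow>\<^sub>E univ A"
  shows "P (Inl (Inl (distinct_list_of U))) (map f (distinct_list_of U))
       = (\<Sum>g \<in> {g \<in> V \<rightarrow>\<^sub>E univ A. restrict g U = f}. P (Inl (Inl (distinct_list_of V))) (map g (distinct_list_of V)))"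
proof -
  let ?tU = "distinct_list_of U" and ?tV = "distinct_list_of V"
  let ?i = "map (first_pos ?tV) ?tU"
  have finV: "finite V" using V(1) wf finite_subset by (auto simp: wf_struc_def)
  have tU: "distinct ?tU" "set ?tU = U" "length ?tU = card U" using distinct_list_of finite_subset[OF U(2) finV] by auto
  have tV: "distinct ?tV" "set ?tV = V" "length ?tV = card V" using distinct_list_of[OF finV] by auto
  have i: "proj ?i ?tV = ?tU" "set ?i \<subseteq> {..<card V}"
    using proj_map_first_pos[of ?tU ?tV] tU(2) tV(2,3) U(2) by auto
  have "1 \<le> card U" "card U \<le> card V"
    using U finV finite_subset[OF U(2) finV] by (auto simp: Suc_le_eq card_gt_0_iff intro: card_mono)
  then have "P (Inl (Inl ?tU)) h' = (\<Sum>h\<in>{h \<in> tuples (univ A) (card V). proj ?i h = h'}. P (Inl (Inl ?tV)) h)" for h'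
    using tuple_vertex_marginal[OF distinct_list_of_tuples[OF V(1)], of ?i] i tU(3) V(2) by simp
  also have "(\<Sum>h\<in>{h \<in> tuples (univ A) (card V). proj ?i h = map f ?tU}. P (Inl (Inl ?tV)) h)
      = (\<Sum>g \<in> {g \<in> V \<rightarrow>\<^sub>E univ A. restrict g U = f}. P (Inl (Inl ?tV)) (map g ?tV))"
    using sum_proj_eq_sum_restrict[OF finB _ _ , of ?tV _ ?i f] i tU tV f
    by (simp add: consistent_if_distinct tuples_def)
  finally show ?thesis .
qed

lemma constraint_vertex_restrict_marginal:
  assumes finB: "finite (univ A)" and c: "c \<in> constraints sig X"
    and U: "U \<noteq> {}" "U \<subseteq> set (snd c)" "card U \<le> k" and f: "f \<in> U \<rightarrow>\<^sub>E univ A"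
  shows "P (Inl (Inl (distinct_list_of U))) (map f (distinct_list_of U))
       = (\<Sum>g \<in> {g \<in> set (snd c) \<rightarrow>\<^sub>E univ A. restrict g U = f}. P (Inl (Inr c)) (map g (snd c)))"
proof -
  let ?tU = "distinct_list_of U" and ?i = "map (first_pos (snd c)) (distinct_list_of U)"
  have len: "length (snd c) = ar (fst c)" using wf_struc_constraintD(3)[OF wf c] .
  have finU: "finite U" using finite_subset[OF U(2)] by simp
  have tU: "distinct ?tU" "set ?tU = U" "length ?tU = card U" using distinct_list_of[OF finU] by auto
  have i: "proj ?i (snd c) = ?tU" "set ?i \<subseteq> {..<ar (fst c)}"
    using proj_map_first_pos[of ?tU "snd c"] tU(2) U(2) len by auto
  have "1 \<le> card U" using U(1) finU by (simp add: Suc_le_eq card_gt_0_iff)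
  then have "P (Inl (Inl ?tU)) h' = (\<Sum>h\<in>{h \<in> tuples (univ A) (ar (fst c)). proj ?i h = h'}. P (Inl (Inr c)) h)" for h'
    using constraint_vertex_marginal[OF c, of ?i] i tU(3) U(3) by simp
  also have "(\<Sum>h\<in>{h \<in> tuples (univ A) (ar (fst c)). proj ?i h = map f ?tU}. P (Inl (Inr c)) h)
      = (\<Sum>g \<in> {g \<in> set (snd c) \<rightarrow>\<^sub>E univ A. restrict g U = f}. P (Inl (Inr c)) (map g (snd c)))"
    using sum_proj_eq_sum_restrict[where t = "snd c" and G = "P (Inl (Inr c))" and i = ?i and f = f,
        OF finB constraint_vertex_inconsistent[OF c]] i tU f len by simp
  finally show ?thesis .
qed

lemma SA_solution_if_fg_solution_sak:
  assumes finB: "finite (univ A)"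
  shows "SA_solution sig k X A (\<lambda>V f. P (Inl (Inl (distinct_list_of V))) (map f (distinct_list_of V)))
    (\<lambda>c f. P (Inl (Inr c)) (map f (snd c)))"
proof
  fix V f assume "V \<subseteq> univ X" "1 \<le> card V" "card V \<le> k"
  then show "0 \<le> P (Inl (Inl (distinct_list_of V))) (map f (distinct_list_of V))
      \<and> P (Inl (Inl (distinct_list_of V))) (map f (distinct_list_of V)) \<le> 1"
    using tuple_vertex_distribution[OF distinct_list_of_tuples] by blast
next
  fix V assume V: "V \<subseteq> univ X" "1 \<le> card V" "card V \<le> k"
  let ?t = "distinct_list_of V"
  have t: "distinct ?t" "set ?t = V" "length ?t = card V"
    using distinct_list_of finite_subset[OF V(1)] wf by (auto simp: wf_struc_def)
  have "(\<Sum>f \<in> set ?t \<rightarrow>\<^sub>E univ A. P (Inl (Inl ?t)) (map f ?t)) = (\<Sum>h\<in>tuples (univ A) (length ?t). P (Inl (Inl ?t)) h)"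
    using t(1) by (intro sum_tuples_eq_sum_PiE[OF finB, symmetric]) (simp add: consistent_if_distinct tuples_def)
  then show "(\<Sum>f \<in> V \<rightarrow>\<^sub>E univ A. P (Inl (Inl ?t)) (map f ?t)) = 1"
    using tuple_vertex_distribution[OF distinct_list_of_tuples[OF V(1)] V(2,3)] t(2,3) by simp
next
  fix U V f assume "U \<noteq> {}" "U \<subseteq> V" "V \<subseteq> univ X" "card V \<le> k" "f \<in> U \<rightarrow>\<^sub>E univ A"
  then show "P (Inl (Inl (distinct_list_of U))) (map f (distinct_list_of U))
      = (\<Sum>g \<in> {g \<in> V \<rightarrow>\<^sub>E univ A. restrict g U = f}. P (Inl (Inl (distinct_list_of V))) (map g (distinct_list_of V)))"
    by (rule tuple_vertex_restrict_marginal[OF finB])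
next
  fix c U f assume "c \<in> constraints sig X" "U \<noteq> {}" "U \<subseteq> set (snd c)" "card U \<le> k" "f \<in> U \<rightarrow>\<^sub>E univ A"
  then show "P (Inl (Inl (distinct_list_of U))) (map f (distinct_list_of U))
      = (\<Sum>g \<in> {g \<in> set (snd c) \<rightarrow>\<^sub>E univ A. restrict g U = f}. P (Inl (Inr c)) (map g (snd c)))"
    by (rule constraint_vertex_restrict_marginal[OF finB])
qed (use constraint_vertex_weight[of _ "{}"] in \<open>auto simp: eq_on_def\<close>)

end

section \<open>Invariance of feasibility\<close>

lemma equiv1_sym: "equiv1 sig A B \<Longrightarrow> equiv1 sig B A"
  by (simp add: equiv1_def)

theorem SA_feasible_transfer_equiv1:
  assumes sig: "wf_sig sig ar" and wf_X: "wf_struc sig ar X" and wf_X': "wf_struc sig ar X'"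
    and wf_A: "wf_struc sig ar A" and equiv: "equiv1 sig X X'" and feasible: "SA_feasible sig 1 X A"
  shows "SA_feasible sig 1 X' A"
proof -
  interpret equiv1_factor_graphs sig X X'
    using sig wf_X wf_X' equiv by unfold_locales (simp_all add: wf_factor_graph_if_wf_struc)
  have finB: "finite (univ A)" using wf_A by (simp add: wf_struc_def)
  obtain p q where "SA_solution sig 1 X A p q" using feasible SA_feasible_iff_SA_solution by blast
  then have "fg_solution sig X (sa1_vertex_cond (univ A)) (sa1_edge_cond A ar) (sa1_assignment (univ A) p q)"
    using finB wf_X by (rule SA_solution.fg_solution_sa1_assignment[OF _ order.refl])
  then have "fg_solution sig X' (sa1_vertex_cond (univ A)) (sa1_edge_cond A ar)
      (avg_assignment (sa1_assignment (univ A) p q))"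
    by (intro fg_solution_avg_assignment) (simp_all add: sa1_vertex_cond_avg[OF finB] sa1_edge_cond_avg[OF finB])
  then show ?thesis
    using SA_solution_1_if_fg_solution_sa1[OF wf_X' _ sig finB] SA_feasible_iff_SA_solution by blast
qed

theorem SA_feasible_transfer_kpow:
  assumes sig: "wf_sig sig ar" and wf_X: "wf_struc sig ar X" and wf_X': "wf_struc sig ar X'"
    and wf_A: "wf_struc sig ar A" and equiv: "equiv1 (ksig sig ar k) (kpow sig k X) (kpow sig k X')"
    and feasible: "SA_feasible sig k X A"
  shows "SA_feasible sig k X' A"
proof -
  interpret equiv1_factor_graphs "ksig sig ar k" "kpow sig k X" "kpow sig k X'"
    using sig wf_X wf_X' equiv by unfold_locales (simp_all add: wf_factor_graph_kpow)
  have finB: "finite (univ A)" using wf_A by (simp add: wf_struc_def)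
  obtain p q where "SA_solution sig k X A p q" using feasible SA_feasible_iff_SA_solution by blast
  then have "fg_solution (ksig sig ar k) (kpow sig k X) (\<lambda>_ _. True) (sak_edge_cond A ar) (sak_assignment (univ A) p q)"
    using finB wf_X by (rule SA_solution.fg_solution_sak_assignment)
  then have "fg_solution (ksig sig ar k) (kpow sig k X') (\<lambda>_ _. True) (sak_edge_cond A ar)
      (avg_assignment (sak_assignment (univ A) p q))"
    by (intro fg_solution_avg_assignment) (simp_all add: sak_edge_cond_avg[OF finB])
  then show ?thesis
    using SA_solution_if_fg_solution_sak[OF wf_X' _ finB] SA_feasible_iff_SA_solution by blast
qed

theorem corollary7p5:
  fixes sig :: "'r set" and ar :: "'r \<Rightarrow> nat" and k :: nat
    and X :: "('x, 'r) struc" and X' :: "('y, 'r) struc" and A :: "('a, 'r) struc"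
  assumes "wf_sig sig ar"
    and "wf_struc sig ar X" and "wf_struc sig ar X'" and "wf_struc sig ar A"
    and "1 \<le> k"
    and "equivk sig ar k X X'"
  shows "SA_feasible sig k X A \<longleftrightarrow> SA_feasible sig k X' A"
proof (cases "k = 1")
  case True
  then have "equiv1 sig X X'" using assms(6) by (simp add: equivk_def)
  then show ?thesis
    using SA_feasible_transfer_equiv1[OF assms(1,2,3,4)] SA_feasible_transfer_equiv1[OF assms(1,3,2,4)] True
    by (metis equiv1_sym)
next
  case False
  then have "equiv1 (ksig sig ar k) (kpow sig k X) (kpow sig k X')" using assms(6) by (simp add: equivk_def)
  then show ?thesis
    using SA_feasible_transfer_kpow[OF assms(1,2,3,4)] SA_feasible_transfer_kpow[OF assms(1,3,2,4)]
    by (metis equiv1_sym)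
qed

end
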